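(* Let $n,k$ be positive integers. Define $\varphi:[(k+1)n]\to[kn]$ by $\varphi(x)=x-\lfloor (x-1)/(k+1)\rfloor$ for $x<n(k+1)$ and $\varphi(n(k+1))=1$; thus $\varphi$ identifies exactly the pairs $\{k+1,k+2\},\{2(k+1),2(k+1)+1\},\dots,\{(n-1)(k+1),(n-1)(k+1)+1\},\{n(k+1),1\}$ and preserves the cyclic order otherwise. For $\pi\in NC_{k+1}(n)$ let $f(\pi)$ be the finest partition of $[kn]$ such that for every block $V\in\pi$ the set $\varphi(V)$ is contained in a single block of $f(\pi)$. Then $f(\pi)\in NC^k(n)$ for all $\pi\in NC_{k+1}(n)$, and $f:NC_{k+1}(n)\to NC^k(n)$ is a bijection.
   Context: A partition $\pi$ of $[N]=\{1,\dots,N\}$ is non-crossing if there are no $1\le a<b<c<d\le N$ with $a,c$ in one block and $b,d$ in another. $NC^k(n)$ is the set of non-crossing partitions of $[kn]$ all of whose blocks have size divisible by $k$. $NC_{k+1}(n)$ is the set of non-crossing partitions of $[(k+1)n]$ all of whose blocks have size exactly $k+1$. *)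

theory Defs
  imports "HOL-Library.Disjoint_Sets"
begin

definition noncrossing :: "nat set set \<Rightarrow> bool" where
  "noncrossing P \<longleftrightarrow>
     \<not> (\<exists>a b c d B1 B2. B1 \<in> P \<and> B2 \<in> P \<and> B1 \<noteq> B2 \<and> a < b \<and> b < c \<and> c < d \<and>
           a \<in> B1 \<and> c \<in> B1 \<and> b \<in> B2 \<and> d \<in> B2)"

definition NC_upper :: "nat \<Rightarrow> nat \<Rightarrow> nat set set set" where
  "NC_upper k n = {P. partition_on {1..k*n} P \<and> noncrossing P \<and> (\<forall>B\<in>P. k dvd card B)}"

definition NC_lower :: "nat \<Rightarrow> nat \<Rightarrow> nat set set set" where
  "NC_lower m n = {P. partition_on {1..m*n} P \<and> noncrossing P \<and> (\<forall>B\<in>P. card B = m)}"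

definition phi :: "nat \<Rightarrow> nat \<Rightarrow> nat \<Rightarrow> nat" where
  "phi k n x = (if x < n*(k+1) then x - (x - 1) div (k+1) else 1)"

definition refines :: "'a set set \<Rightarrow> 'a set set \<Rightarrow> bool" where
  "refines P Q \<longleftrightarrow> (\<forall>B\<in>P. \<exists>C\<in>Q. B \<subseteq> C)"

definition compatible :: "nat \<Rightarrow> nat \<Rightarrow> nat set set \<Rightarrow> nat set set \<Rightarrow> bool" where
  "compatible k n \<pi> \<sigma> \<longleftrightarrow> partition_on {1..k*n} \<sigma> \<and> (\<forall>V\<in>\<pi>. \<exists>B\<in>\<sigma>. phi k n ` V \<subseteq> B)"

definition fmap :: "nat \<Rightarrow> nat \<Rightarrow> nat set set \<Rightarrow> nat set set" where
  "fmap k n \<pi> = (THE \<sigma>. compatible k n \<pi> \<sigma> \<and> (\<forall>\<tau>. compatible k n \<pi> \<tau> \<longrightarrow> refines \<sigma> \<tau>))"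

end

theory Submission
  imports Defs
begin

text \<open>Induction on \<open>n\<close>. Every non-crossing partition has a block that is an interval. Removing an
  interval block \<open>{a..<a+k+1}\<close> from \<open>\<pi> \<in> NC_{k+1}(n+1)\<close> leaves \<open>\<pi>' \<in> NC_{k+1}(n)\<close>, and \<open>f(\<pi>)\<close> is
  obtained from \<open>f(\<pi>')\<close> in one of two ways: if \<open>a\<close> is not the first point \<open>j(k+1)+1\<close> of a segment,
  \<open>\<phi>\<close> maps the interval onto an interval of length \<open>k\<close>, which is inserted as a new block; if it is,
  \<open>\<phi>\<close> maps it onto \<open>k+1\<close> consecutive points \<open>p..p+k\<close> (the last one glued with the next segment),
  and \<open>f(\<pi>)\<close> arises by inserting \<open>k\<close> new points after \<open>p\<close> into the block of \<open>p\<close>. Conversely every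
  \<open>\<sigma> \<in> NC^k(n+1)\<close> has an interval block, which is either of size \<open>k\<close> or contains a window
  \<open>jk+1..jk+k+1\<close>, so it arises from some \<open>\<sigma>' \<in> NC^k(n)\<close> in one of the two ways. This gives
  surjectivity. For injectivity one shows that the shape of \<open>\<sigma>\<close> forces the corresponding block
  \<open>{a..<a+k+1}\<close> to lie in \<pi>; in the window case this uses that a block of \<pi> leaving the segment
  would split off a union of blocks of \<pi> that \<open>\<phi>\<close> does not glue to its complement, so that a
  block of \<open>f(\<pi>)\<close> containing the image of the segment could be split along it.\<close>

definition shift_up :: "nat \<Rightarrow> nat \<Rightarrow> nat \<Rightarrow> nat" where
  "shift_up L a x = (if x < a then x else x + L)"

definition shift_down :: "nat \<Rightarrow> nat \<Rightarrow> nat \<Rightarrow> nat" where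
  "shift_down L a y = (if y < a then y else y - L)"

lemma shift_up_less_iff[simp]: "shift_up L a x < shift_up L a y \<longleftrightarrow> x < y"
  by (auto simp: shift_up_def)

lemma shift_up_eq_iff[simp]: "shift_up L a x = shift_up L a y \<longleftrightarrow> x = y"
  by (auto simp: shift_up_def)

lemma shift_up_le_iff[simp]: "shift_up L a x \<le> shift_up L a y \<longleftrightarrow> x \<le> y"
  by (auto simp: shift_up_def)

lemma shift_down_shift_up[simp]: "shift_down L a (shift_up L a x) = x"
  by (auto simp: shift_up_def shift_down_def)

lemma shift_up_shift_down: "y \<notin> {a..<a+L} \<Longrightarrow> shift_up L a (shift_down L a y) = y"
  by (auto simp: shift_up_def shift_down_def)

lemma shift_up_notin: "shift_up L a x \<notin> {a..<a+L}"
  by (auto simp: shift_up_def)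

lemma inj_shift_up: "inj_on (shift_up L a) A"
  by (auto simp: inj_on_def)

lemma shift_up_image:
  assumes "1 \<le> a" "a \<le> M+1"
  shows "shift_up L a ` {1..M} = {1..M+L} - {a..<a+L}"
proof -
  have "y \<in> shift_up L a ` {1..M}" if "y \<in> {1..M+L} - {a..<a+L}" for y
    using that assms by (intro image_eqI[of _ _ "shift_down L a y"]) (auto simp: shift_up_def shift_down_def)
  moreover have "shift_up L a ` {1..M} \<subseteq> {1..M+L} - {a..<a+L}"
    using assms by (auto simp: shift_up_def)
  ultimately show ?thesis by blast
qed

lemma shift_up_shift_down_image:
  assumes "X \<inter> {a..<a+L} = {}"
  shows "shift_up L a ` shift_down L a ` X = X"
proof -
  have "shift_up L a (shift_down L a y) = y" if "y \<in> X" for y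
    using assms that shift_up_shift_down by blast
  then show ?thesis by (force simp: image_image)
qed

lemma shift_down_bij:
  assumes "1 \<le> b" "b \<le> M+1"
  shows "inj_on (shift_down L b) ({1..M+L} - {b..<b+L})" "shift_down L b ` ({1..M+L} - {b..<b+L}) = {1..M}"
proof -
  show "inj_on (shift_down L b) ({1..M+L} - {b..<b+L})"
    by (rule inj_on_inverseI[where g = "shift_up L b"]) (auto simp: shift_up_shift_down)
  have "shift_down L b ` ({1..M+L} - {b..<b+L}) = shift_down L b ` (shift_up L b ` {1..M})"
    using shift_up_image[OF assms] by simp
  also have "\<dots> = {1..M}" by (simp add: image_image)
  finally show "shift_down L b ` ({1..M+L} - {b..<b+L}) = {1..M}" .
qed

section \<open>Partitions\<close>

lemma partition_on_same_block:
  "partition_on A P \<Longrightarrow> B \<in> P \<Longrightarrow> C \<in> P \<Longrightarrow> x \<in> B \<Longrightarrow> x \<in> C \<Longrightarrow> B = C"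
  unfolding partition_on_def disjoint_def by blast

lemma partition_on_block_subset: "partition_on A P \<Longrightarrow> B \<in> P \<Longrightarrow> B \<subseteq> A"
  unfolding partition_on_def by blast

lemma partition_on_ex_block: "partition_on A P \<Longrightarrow> x \<in> A \<Longrightarrow> \<exists>B\<in>P. x \<in> B"
  unfolding partition_on_def by blast

lemma partition_on_block_nonempty: "partition_on A P \<Longrightarrow> B \<in> P \<Longrightarrow> B \<noteq> {}"
  unfolding partition_on_def by blast

lemma partition_on_other_block:
  assumes P: "partition_on A P" and B0: "B0 \<in> P" and ne: "B0 \<noteq> A"
  shows "\<exists>C\<in>P. C \<noteq> B0"
proof (rule ccontr)
  assume "\<not> ?thesis"
  then have "\<forall>C\<in>P. C = B0" by blast
  then have "\<Union>P \<subseteq> B0" by blast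
  moreover have "\<Union>P = A" using P unfolding partition_on_def by blast
  moreover have "B0 \<subseteq> A" using partition_on_block_subset[OF P B0] .
  ultimately show False using ne by blast
qed

lemma refines_antisym:
  assumes "partition_on A P" "partition_on A Q" "refines P Q" "refines Q P"
  shows "P = Q"
  using Disjoint_Sets.refines_asym[of A P Q] assms unfolding Disjoint_Sets.refines_def refines_def by blast

definition saturated :: "'a set set \<Rightarrow> 'a set \<Rightarrow> bool" where
  "saturated P R \<longleftrightarrow> (\<forall>W\<in>P. W \<subseteq> R \<or> W \<inter> R = {})"

lemma card_saturated_dvd:
  assumes P: "partition_on A P" and cd: "\<forall>B\<in>P. card B = m" and fin: "finite A"
    and R: "R \<subseteq> A" and sat: "saturated P R"
  shows "m dvd card R"
proof -
  define F where "F = {W\<in>P. W \<subseteq> R}"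
  have "R = \<Union>F"
  proof
    show "R \<subseteq> \<Union>F"
    proof
      fix x assume "x \<in> R"
      then obtain W where "W \<in> P" "x \<in> W" using partition_on_ex_block[OF P] R by blast
      then show "x \<in> \<Union>F" using sat \<open>x \<in> R\<close> unfolding F_def saturated_def by blast
    qed
  qed (auto simp: F_def)
  moreover have "pairwise disjnt F" using partition_onD2[OF P] unfolding F_def
    by (rule pairwise_subset) blast
  moreover have "\<And>W. W \<in> F \<Longrightarrow> finite W"
    unfolding F_def using partition_on_block_subset[OF P] fin finite_subset by blast
  ultimately have "card R = sum card F" using card_Union_disjoint by metis
  also have "\<dots> = m * card F" using cd unfolding F_def by simp
  finally show ?thesis by simp
qed

definition split_by :: "nat set \<Rightarrow> nat set set \<Rightarrow> nat set set" where
  "split_by Q \<sigma> = ((\<lambda>C. C \<inter> Q) ` \<sigma> \<union> (\<lambda>C. C - Q) ` \<sigma>) - {{}}"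

lemma partition_on_split_by:
  assumes S: "partition_on A \<sigma>"
  shows "partition_on A (split_by Q \<sigma>)"
proof (rule partition_onI)
  show "\<Union>(split_by Q \<sigma>) = A"
  proof
    show "\<Union>(split_by Q \<sigma>) \<subseteq> A" unfolding split_by_def using partition_on_block_subset[OF S] by blast
    show "A \<subseteq> \<Union>(split_by Q \<sigma>)"
    proof
      fix x assume "x \<in> A"
      then obtain C where C: "C \<in> \<sigma>" "x \<in> C" using partition_on_ex_block[OF S] by blast
      then have "x \<in> C \<inter> Q \<or> x \<in> C - Q" by blast
      then show "x \<in> \<Union>(split_by Q \<sigma>)" using C unfolding split_by_def by blast
    qed
  qed
  show "{} \<notin> split_by Q \<sigma>" unfolding split_by_def by blast
  fix X Y assume X: "X \<in> split_by Q \<sigma>" and Y: "Y \<in> split_by Q \<sigma>" and XY: "X \<noteq> Y"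
  obtain C1 where C1: "C1 \<in> \<sigma>" "X = C1 \<inter> Q \<or> X = C1 - Q" using X unfolding split_by_def by blast
  obtain C2 where C2: "C2 \<in> \<sigma>" "Y = C2 \<inter> Q \<or> Y = C2 - Q" using Y unfolding split_by_def by blast
  show "disjnt X Y"
  proof (cases "C1 = C2")
    case False
    then have "C1 \<inter> C2 = {}" using S C1(1) C2(1) unfolding partition_on_def disjoint_def by blast
    then show ?thesis using C1 C2 unfolding disjnt_def by blast
  qed (use C1 C2 XY in \<open>auto simp: disjnt_def\<close>)
qed

definition delete_relabel :: "(nat \<Rightarrow> nat) \<Rightarrow> nat set \<Rightarrow> nat set set \<Rightarrow> nat set set" where
  "delete_relabel h J \<tau> = (`) h ` ((\<inter>) (-J) ` \<tau> - {{}}) - {{}}"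

lemma partition_on_delete_relabel:
  assumes "partition_on A \<tau>" "inj_on h (A - J)" "h ` (A - J) = A'"
  shows "partition_on A' (delete_relabel h J \<tau>)"
proof -
  have P1: "partition_on ((-J) \<inter> A) ((\<inter>) (-J) ` \<tau> - {{}})"
    by (rule partition_on_restrict[OF assms(1)])
  have "(-J) \<inter> A = A - J" by auto
  then have P2: "partition_on (A - J) ((\<inter>) (-J) ` \<tau> - {{}})" using P1 by simp
  from partition_on_inj_image[OF P2 assms(2)] show ?thesis unfolding delete_relabel_def using assms(3) by simp
qed

lemma delete_relabel_memD: "D \<in> delete_relabel h J \<tau> \<Longrightarrow> \<exists>C\<in>\<tau>. D = h ` (C - J)"
  unfolding delete_relabel_def by (auto simp: Diff_eq Int_commute)

lemma delete_relabel_memI: "C \<in> \<tau> \<Longrightarrow> C - J \<noteq> {} \<Longrightarrow> h ` (C - J) \<in> delete_relabel h J \<tau>"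
  unfolding delete_relabel_def by (auto simp: Diff_eq Int_commute)

lemma noncrossingI:
  assumes "\<And>a b c d B1 B2. B1 \<in> P \<Longrightarrow> B2 \<in> P \<Longrightarrow> B1 \<noteq> B2 \<Longrightarrow> a < b \<Longrightarrow> b < c \<Longrightarrow> c < d \<Longrightarrow>
           a \<in> B1 \<Longrightarrow> c \<in> B1 \<Longrightarrow> b \<in> B2 \<Longrightarrow> d \<in> B2 \<Longrightarrow> False"
  shows "noncrossing P"
  using assms unfolding noncrossing_def by blast

lemma noncrossingD:
  "noncrossing P \<Longrightarrow> B1 \<in> P \<Longrightarrow> B2 \<in> P \<Longrightarrow> B1 \<noteq> B2 \<Longrightarrow> a < b \<Longrightarrow> b < c \<Longrightarrow> c < d \<Longrightarrow>
           a \<in> B1 \<Longrightarrow> c \<in> B1 \<Longrightarrow> b \<in> B2 \<Longrightarrow> d \<in> B2 \<Longrightarrow> False"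
  unfolding noncrossing_def by blast

lemma noncrossing_block_between:
  assumes nc: "noncrossing P" and P: "partition_on A P"
    and V: "V \<in> P" "a \<in> V" "b \<in> V" and W: "W \<in> P" "W \<noteq> V"
  shows "W \<subseteq> {a<..<b} \<or> W \<inter> {a<..<b} = {}"
proof (rule ccontr)
  assume "\<not> ?thesis"
  then obtain w w' where w: "w \<in> W" "w \<in> {a<..<b}" and w': "w' \<in> W" "w' \<notin> {a<..<b}"
    by blast
  have "w' \<noteq> a" "w' \<noteq> b" using partition_on_same_block[OF P] V W w' by blast+
  then consider "w' < a" | "b < w'" using w' by fastforce
  then show False
  proof cases
    case 1 then show False using noncrossingD[OF nc W(1) V(1) W(2), of w' a w b] w w' V by auto
  next
    case 2 then show False using noncrossingD[OF nc V(1) W(1) W(2)[symmetric], of a w b w'] w w' V by auto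
  qed
qed

lemma noncrossing_interval_block:
  assumes P: "partition_on {1..M} P" and nc: "noncrossing P" and B0: "B0 \<in> P" "e \<in> B0" "e = 1 \<or> e = M"
    and ex: "\<exists>C\<in>P. C \<noteq> B0"
  shows "\<exists>C\<in>P. C \<noteq> B0 \<and> C = {Min C..Max C}"
proof -
  define Q where "Q = (\<lambda>C. C \<in> P \<and> C \<noteq> B0)"
  obtain C0 where "Q C0" using ex unfolding Q_def by blast
  from ex_has_least_nat[of Q C0 "\<lambda>C. Max C - Min C", OF this]
  obtain C where C: "C \<in> P" "C \<noteq> B0" and mn: "\<And>D. D \<in> P \<Longrightarrow> D \<noteq> B0 \<Longrightarrow> Max C - Min C \<le> Max D - Min D"
    unfolding Q_def by blast
  have fin: "\<And>D. D \<in> P \<Longrightarrow> finite D" using partition_on_block_subset[OF P] finite_subset by blast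
  have ne: "\<And>D. D \<in> P \<Longrightarrow> D \<noteq> {}" using partition_on_block_nonempty[OF P] by blast
  have CI: "C \<subseteq> {Min C..Max C}" using fin[OF C(1)] by auto
  have mC: "Min C \<in> C" "Max C \<in> C" using fin[OF C(1)] ne[OF C(1)] by auto
  \<comment> \<open>A block inside a gap of \<open>C\<close> would have smaller span, and \<open>B0\<close> cannot lie in such a gap
    because it contains an endpoint of \<open>{1..M}\<close>.\<close>
  have "{Min C..Max C} \<subseteq> C"
  proof
    fix z assume z: "z \<in> {Min C..Max C}"
    show "z \<in> C"
    proof (rule ccontr)
      assume zC: "z \<notin> C"
      then have zs: "Min C < z" "z < Max C" using z mC by (auto simp: le_less)
      have "z \<in> {1..M}" using z partition_on_block_subset[OF P C(1)] mC by auto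
      then obtain D where D: "D \<in> P" "z \<in> D" using partition_on_ex_block[OF P] by blast
      have DC: "D \<noteq> C" using D zC by auto
      have Din: "D \<subseteq> {Min C<..<Max C}"
        using noncrossing_block_between[OF nc P C(1) mC D(1) DC] D(2) zs by auto
      have "D \<noteq> B0"
      proof
        assume "D = B0"
        then have "e \<in> {Min C<..<Max C}" using Din B0 by auto
        moreover have "Min C \<ge> 1" "Max C \<le> M" using partition_on_block_subset[OF P C(1)] mC by auto
        ultimately show False using B0(3) by auto
      qed
      then have le: "Max C - Min C \<le> Max D - Min D" using mn D(1) by blast
      have "Min D \<in> D" "Max D \<in> D" using fin[OF D(1)] ne[OF D(1)] by auto
      then have "Min C < Min D" "Max D < Max C" "Min D \<le> Max D" using Din fin[OF D(1)] ne[OF D(1)] by auto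
      then show False using le by linarith
    qed
  qed
  then show ?thesis using CI C by blast
qed

lemma interval_atLeastLessThan_card:
  assumes "C = {Min C..Max C}" "C \<noteq> {}" "finite C"
  shows "C = {Min C..<Min C + card C}"
proof -
  have "card C = card {Min C..Max C}" using assms(1) by simp
  then have c: "card C = Suc (Max C) - Min C" by simp
  moreover have "Min C \<le> Max C" using assms by simp
  ultimately have "Min C + card C = Suc (Max C)" by simp
  then have "{Min C..<Min C + card C} = {Min C..Max C}" by auto
  then show ?thesis using assms(1) by simp
qed

section \<open>Inserting an interval block\<close>

definition insert_interval :: "nat \<Rightarrow> nat \<Rightarrow> nat set set \<Rightarrow> nat set set" where
  "insert_interval L a P = insert {a..<a+L} ((`) (shift_up L a) ` P)"

definition remove_interval :: "nat \<Rightarrow> nat \<Rightarrow> nat set set \<Rightarrow> nat set set" where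
  "remove_interval L a P = (`) (shift_down L a) ` (P - {{a..<a+L}})"

lemma partition_on_insert_interval:
  assumes P: "partition_on {1..M} P" and "1 \<le> a" "a \<le> M+1" "0 < L"
  shows "partition_on {1..M+L} (insert_interval L a P)"
proof -
  have "partition_on (shift_up L a ` {1..M}) ((`) (shift_up L a) ` P - {{}})"
    by (rule partition_on_inj_image[OF P inj_shift_up])
  moreover have "(`) (shift_up L a) ` P - {{}} = (`) (shift_up L a) ` P"
    using partition_onD3[OF P] by auto
  ultimately have "partition_on ({1..M+L} - {a..<a+L}) ((`) (shift_up L a) ` P)"
    using shift_up_image[OF assms(2,3)] by simp
  then show ?thesis unfolding insert_interval_def
    using assms shift_up_notin[of L a] by (subst partition_on_insert) (auto simp: disjnt_def)
qed

lemma noncrossing_insert_interval: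
  assumes "noncrossing P"
  shows "noncrossing (insert_interval L a P)"
proof (rule noncrossingI)
  fix x y z w B1 B2
  assume B: "B1 \<in> insert_interval L a P" "B2 \<in> insert_interval L a P" "B1 \<noteq> B2" "x < y" "y < z" "z < w"
    "x \<in> B1" "z \<in> B1" "y \<in> B2" "w \<in> B2"
  show False
  proof (cases "B1 = {a..<a+L}")
    case True
    then have "B2 \<noteq> {a..<a+L}" using B by auto
    then obtain C2 where "C2 \<in> P" "B2 = shift_up L a ` C2" using B unfolding insert_interval_def by auto
    then obtain y' where "y = shift_up L a y'" using B by auto
    moreover have "y \<in> {a..<a+L}" using B True by auto
    ultimately show False using shift_up_notin[of L a y'] by simp
  next
    case F1: False
    then obtain C1 where C1: "C1 \<in> P" "B1 = shift_up L a ` C1" using B unfolding insert_interval_def by auto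
    show False
    proof (cases "B2 = {a..<a+L}")
      case True
      obtain z' where "z = shift_up L a z'" using B C1 by auto
      moreover have "z \<in> {a..<a+L}" using B True by auto
      ultimately show False using shift_up_notin[of L a z'] by simp
    next
      case False
      then obtain C2 where C2: "C2 \<in> P" "B2 = shift_up L a ` C2" using B unfolding insert_interval_def by auto
      obtain x' z' where "x' \<in> C1" "z' \<in> C1" "x = shift_up L a x'" "z = shift_up L a z'" using B C1 by auto
      moreover obtain y' w' where "y' \<in> C2" "w' \<in> C2" "y = shift_up L a y'" "w = shift_up L a w'" using B C2 by auto
      moreover have "C1 \<noteq> C2" using B C1 C2 by auto
      ultimately show False using B C1 C2 noncrossingD[OF assms, of C1 C2 x' y' z' w'] by auto
    qed
  qed
qed

lemma insert_interval_memD: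
  assumes "B \<in> insert_interval L a P"
  shows "B = {a..<a+L} \<or> (\<exists>C\<in>P. B = shift_up L a ` C \<and> card B = card C)"
  using assms unfolding insert_interval_def by (auto simp: card_image[OF inj_shift_up])

locale interval_block_removal =
  fixes M L a :: nat and P :: "nat set set"
  assumes P: "partition_on {1..M+L} P" and I: "{a..<a+L} \<in> P" and a1: "1 \<le> a" and a2: "a \<le> M+1" and L0: "0 < L"
begin

lemma block_disjoint_interval: "B \<in> P - {{a..<a+L}} \<Longrightarrow> B \<inter> {a..<a+L} = {}"
  using I P unfolding partition_on_def disjoint_def by blast

lemma inj_on_shift_down: "inj_on (shift_down L a) ({1..M+L} - {a..<a+L})"
  by (rule inj_on_inverseI[where g = "shift_up L a"]) (auto simp: shift_up_shift_down)

lemma inj_on_shift_down_block: "B \<in> P - {{a..<a+L}} \<Longrightarrow> inj_on (shift_down L a) B"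
  by (rule inj_on_subset[OF inj_on_shift_down]) (use block_disjoint_interval partition_on_block_subset[OF P] in blast)

lemma shift_up_image_shift_down: "B \<in> P - {{a..<a+L}} \<Longrightarrow> shift_up L a ` (shift_down L a ` B) = B"
  by (rule shift_up_shift_down_image) (rule block_disjoint_interval)

lemma insert_remove: "P = insert_interval L a (remove_interval L a P)"
proof
  show "P \<subseteq> insert_interval L a (remove_interval L a P)"
  proof
    fix B assume "B \<in> P"
    show "B \<in> insert_interval L a (remove_interval L a P)"
    proof (cases "B = {a..<a+L}")
      case True then show ?thesis unfolding insert_interval_def by simp
    next
      case False
      then have "B \<in> P - {{a..<a+L}}" using \<open>B \<in> P\<close> by simp
      then have "shift_up L a ` (shift_down L a ` B) \<in> insert_interval L a (remove_interval L a P)" unfolding insert_interval_def remove_interval_def by blast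
      then show ?thesis using shift_up_image_shift_down \<open>B \<in> P - {{a..<a+L}}\<close> by simp
    qed
  qed
  show "insert_interval L a (remove_interval L a P) \<subseteq> P"
  proof
    fix C assume "C \<in> insert_interval L a (remove_interval L a P)"
    then consider "C = {a..<a+L}" | B where "B \<in> P - {{a..<a+L}}" "C = shift_up L a ` (shift_down L a ` B)"
      unfolding insert_interval_def remove_interval_def by blast
    then show "C \<in> P" using I shift_up_image_shift_down by cases auto
  qed
qed

lemma partition_on_diff_interval: "partition_on ({1..M+L} - {a..<a+L}) (P - {{a..<a+L}})"
proof -
  have U: "\<Union>P = {1..M+L}" using P unfolding partition_on_def by simp
  have "\<Union>(P - {{a..<a+L}}) = {1..M+L} - {a..<a+L}"
  proof
    show "\<Union>(P - {{a..<a+L}}) \<subseteq> {1..M+L} - {a..<a+L}"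
      using block_disjoint_interval U by blast
    show "{1..M+L} - {a..<a+L} \<subseteq> \<Union>(P - {{a..<a+L}})"
    proof
      fix x assume x: "x \<in> {1..M+L} - {a..<a+L}"
      then obtain B where "B \<in> P" "x \<in> B" using U by blast
      then show "x \<in> \<Union>(P - {{a..<a+L}})" using x by blast
    qed
  qed
  moreover have "disjoint (P - {{a..<a+L}})" using partition_onD2[OF P] by (rule pairwise_subset) blast
  moreover have "{} \<notin> P - {{a..<a+L}}" using partition_onD3[OF P] by blast
  ultimately show ?thesis unfolding partition_on_def by blast
qed

lemma partition_on_remove: "partition_on {1..M} (remove_interval L a P)"
proof -
  from partition_on_inj_image[OF partition_on_diff_interval inj_on_shift_down]
  have "partition_on (shift_down L a ` ({1..M+L} - {a..<a+L})) ((`) (shift_down L a) ` (P - {{a..<a+L}}) - {{}})" .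
  moreover have "shift_down L a ` ({1..M+L} - {a..<a+L}) = {1..M}"
  proof -
    have "shift_down L a ` ({1..M+L} - {a..<a+L}) = shift_down L a ` (shift_up L a ` {1..M})"
      using shift_up_image[OF a1 a2] by simp
    also have "\<dots> = {1..M}" by (simp add: image_image)
    finally show ?thesis .
  qed
  moreover have "{} \<notin> (`) (shift_down L a) ` (P - {{a..<a+L}})" using partition_onD3[OF P] by auto
  ultimately show ?thesis unfolding remove_interval_def by simp
qed

lemma remove_interval_memD: "C \<in> remove_interval L a P \<Longrightarrow> \<exists>B\<in>P. C = shift_down L a ` B \<and> card C = card B"
proof -
  assume "C \<in> remove_interval L a P"
  then obtain B where B: "B \<in> P - {{a..<a+L}}" "C = shift_down L a ` B" unfolding remove_interval_def by blast
  then have "card C = card B" using card_image[OF inj_on_shift_down_block[OF B(1)]] by simp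
  then show ?thesis using B by blast
qed

lemma noncrossing_remove: "noncrossing P \<Longrightarrow> noncrossing (remove_interval L a P)"
proof (rule noncrossingI)
  fix x y z w B1 B2
  assume nc: "noncrossing P"
  assume B: "B1 \<in> remove_interval L a P" "B2 \<in> remove_interval L a P" "B1 \<noteq> B2" "x < y" "y < z" "z < w"
    "x \<in> B1" "z \<in> B1" "y \<in> B2" "w \<in> B2"
  obtain C1 where C1: "C1 \<in> P - {{a..<a+L}}" "B1 = shift_down L a ` C1" using B unfolding remove_interval_def by auto
  obtain C2 where C2: "C2 \<in> P - {{a..<a+L}}" "B2 = shift_down L a ` C2" using B unfolding remove_interval_def by auto
  have "shift_up L a ` B1 = C1" "shift_up L a ` B2 = C2" using shift_up_image_shift_down C1 C2 by auto
  then have "shift_up L a x \<in> C1" "shift_up L a z \<in> C1" "shift_up L a y \<in> C2" "shift_up L a w \<in> C2" using B by auto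
  moreover have "C1 \<noteq> C2" using B C1 C2 by auto
  ultimately show False using noncrossingD[OF nc, of C1 C2 "shift_up L a x" "shift_up L a y" "shift_up L a z" "shift_up L a w"] B C1 C2
    by auto
qed

end

lemma remove_insert_interval: "0 < L \<Longrightarrow> remove_interval L a (insert_interval L a X) = X"
proof -
  assume L: "0 < L"
  have "shift_up L a ` B \<noteq> {a..<a+L}" for B
  proof
    assume "shift_up L a ` B = {a..<a+L}"
    then have "a \<in> shift_up L a ` B" using L by auto
    then obtain x where "a = shift_up L a x" by blast
    moreover have "a \<in> {a..<a+L}" using L by simp
    ultimately show False using shift_up_notin[of L a x] by simp
  qed
  then have "insert_interval L a X - {{a..<a+L}} = (`) (shift_up L a) ` X" unfolding insert_interval_def by auto
  then show ?thesis unfolding remove_interval_def by (simp add: image_image)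
qed

lemma NC_lower_insert_interval:
  assumes k: "0 < k" and pi: "\<pi> \<in> NC_lower (k+1) n" and a: "1 \<le> a" "a \<le> (k+1)*n+1"
  shows "insert_interval (k+1) a \<pi> \<in> NC_lower (k+1) (Suc n)"
proof -
  have P: "partition_on {1..(k+1)*n} \<pi>" and nc: "noncrossing \<pi>" and cd: "\<forall>B\<in>\<pi>. card B = k+1"
    using pi unfolding NC_lower_def by auto
  have "partition_on {1..(k+1)*n+(k+1)} (insert_interval (k+1) a \<pi>)" using partition_on_insert_interval[OF P a, of "k+1"] by simp
  moreover have "\<forall>B\<in>insert_interval (k+1) a \<pi>. card B = k+1" using insert_interval_memD[of _ "k+1" a \<pi>] cd by fastforce
  ultimately show ?thesis using noncrossing_insert_interval[OF nc] unfolding NC_lower_def by (simp add: algebra_simps)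
qed

lemma NC_lower_remove_interval:
  assumes k: "0 < k" and pi: "\<pi> \<in> NC_lower (k+1) (Suc n)" and I: "{a..<a+(k+1)} \<in> \<pi>"
    and a: "1 \<le> a" "a \<le> (k+1)*n+1"
  shows "remove_interval (k+1) a \<pi> \<in> NC_lower (k+1) n \<and> \<pi> = insert_interval (k+1) a (remove_interval (k+1) a \<pi>)"
proof -
  have P: "partition_on {1..(k+1)*n + (k+1)} \<pi>" and nc: "noncrossing \<pi>" and cd: "\<forall>B\<in>\<pi>. card B = k+1"
    using pi unfolding NC_lower_def by (auto simp: algebra_simps)
  interpret R: interval_block_removal "(k+1)*n" "k+1" a \<pi>
    by unfold_locales (use P I a in auto)
  show ?thesis using R.partition_on_remove R.noncrossing_remove[OF nc] R.insert_remove R.remove_interval_memD cd unfolding NC_lower_def by fastforce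
qed

lemma NC_upper_insert_interval:
  assumes k: "0 < k" and S: "\<sigma> \<in> NC_upper k n" and b: "1 \<le> b" "b \<le> k*n+1"
  shows "insert_interval k b \<sigma> \<in> NC_upper k (Suc n)"
proof -
  have P: "partition_on {1..k*n} \<sigma>" and nc: "noncrossing \<sigma>" and cd: "\<forall>B\<in>\<sigma>. k dvd card B"
    using S unfolding NC_upper_def by auto
  have "partition_on {1..k*n+k} (insert_interval k b \<sigma>)" using partition_on_insert_interval[OF P b k] .
  moreover have "\<forall>B\<in>insert_interval k b \<sigma>. k dvd card B" using insert_interval_memD[of _ k b \<sigma>] cd by fastforce
  ultimately show ?thesis using noncrossing_insert_interval[OF nc] unfolding NC_upper_def by (simp add: algebra_simps)
qed

lemma NC_upper_remove_interval:
  assumes k: "0 < k" and S: "\<sigma> \<in> NC_upper k (Suc n)" and I: "{b..<b+k} \<in> \<sigma>" and b: "1 \<le> b" "b \<le> k*n+1"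
  shows "remove_interval k b \<sigma> \<in> NC_upper k n \<and> \<sigma> = insert_interval k b (remove_interval k b \<sigma>)"
proof -
  have P: "partition_on {1..k*n + k} \<sigma>" and nc: "noncrossing \<sigma>" and cd: "\<forall>B\<in>\<sigma>. k dvd card B"
    using S unfolding NC_upper_def by (auto simp: algebra_simps)
  interpret R: interval_block_removal "k*n" k b \<sigma>
    by unfold_locales (use P I b k in auto)
  show ?thesis using R.partition_on_remove R.noncrossing_remove[OF nc] R.insert_remove R.remove_interval_memD cd unfolding NC_upper_def by fastforce
qed

section \<open>Widening a block\<close>

definition widen_block :: "nat \<Rightarrow> nat \<Rightarrow> nat set \<Rightarrow> nat set" where
  "widen_block L p B = shift_up L (p+1) ` B \<union> (if p \<in> B then {p+1..<p+1+L} else {})"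

definition widen :: "nat \<Rightarrow> nat \<Rightarrow> nat set set \<Rightarrow> nat set set" where
  "widen L p P = widen_block L p ` P"

definition narrow_block :: "nat \<Rightarrow> nat \<Rightarrow> nat set \<Rightarrow> nat set" where
  "narrow_block L p B = shift_down L (p+1) ` (B - {p+1..<p+1+L})"

definition narrow :: "nat \<Rightarrow> nat \<Rightarrow> nat set set \<Rightarrow> nat set set" where
  "narrow L p P = narrow_block L p ` P"

definition collapse :: "nat \<Rightarrow> nat \<Rightarrow> nat \<Rightarrow> nat" where
  "collapse L p y = (if y \<in> {p+1..<p+1+L} then p else shift_down L (p+1) y)"

lemma collapse_mono: "y \<le> y' \<Longrightarrow> collapse L p y \<le> collapse L p y'"
  by (auto simp: collapse_def shift_down_def)

lemma collapse_widen_block: "y \<in> widen_block L p B \<Longrightarrow> collapse L p y \<in> B"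
  by (auto simp: widen_block_def collapse_def shift_up_def shift_down_def split: if_splits)

lemma atLeastLessThan_subset_widen_block: "p \<in> B \<Longrightarrow> {p..<p+1+L} \<subseteq> widen_block L p B"
proof
  fix y assume "p \<in> B" "y \<in> {p..<p+1+L}"
  moreover have "shift_up L (p+1) p = p" by (simp add: shift_up_def)
  ultimately show "y \<in> widen_block L p B" unfolding widen_block_def by (cases "y = p") force+
qed

lemma Union_widen:
  assumes "p \<in> \<Union>P"
  shows "\<Union>(widen L p P) = shift_up L (p+1) ` \<Union>P \<union> {p+1..<p+1+L}"
proof -
  obtain B0 where B0: "B0 \<in> P" "p \<in> B0" using assms by blast
  have "\<Union>(widen L p P) = (\<Union>B\<in>P. shift_up L (p+1) ` B) \<union> (\<Union>B\<in>P. if p \<in> B then {p+1..<p+1+L} else {})"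
    unfolding widen_def widen_block_def by blast
  also have "(\<Union>B\<in>P. if p \<in> B then {p+1..<p+1+L} else {}) = {p+1..<p+1+L}" using B0 by auto
  finally show ?thesis by (simp add: image_Union)
qed

lemma partition_on_widen:
  assumes P: "partition_on {1..M} P" and p: "1 \<le> p" "p \<le> M"
  shows "partition_on {1..M+L} (widen L p P)"
proof (rule partition_onI)
  have U: "\<Union>P = {1..M}" using P by (simp add: partition_on_def)
  have "p \<in> \<Union>P" using U p by auto
  then have "\<Union>(widen L p P) = shift_up L (p+1) ` {1..M} \<union> {p+1..<p+1+L}"
    using Union_widen[OF \<open>p \<in> \<Union>P\<close>] U by simp
  also have "\<dots> = {1..M+L}" using shift_up_image[of "p+1" M L] p by auto
  finally show "\<Union>(widen L p P) = {1..M+L}" .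
  show "{} \<notin> widen L p P"
  proof
    assume "{} \<in> widen L p P"
    then obtain B where "B \<in> P" "widen_block L p B = {}" unfolding widen_def by auto
    then show False using partition_on_block_nonempty[OF P] unfolding widen_block_def by blast
  qed
  fix X Y assume XY: "X \<in> widen L p P" "Y \<in> widen L p P" "X \<noteq> Y"
  then obtain B C where BC: "B \<in> P" "C \<in> P" "X = widen_block L p B" "Y = widen_block L p C" unfolding widen_def by blast
  then have "B \<noteq> C" using XY by auto
  then have BCd: "B \<inter> C = {}" using P BC unfolding partition_on_def disjoint_def by blast
  show "disjnt X Y"
    unfolding disjnt_def
  proof (rule ccontr)
    assume "X \<inter> Y \<noteq> {}"
    then obtain y where "y \<in> X" "y \<in> Y" by blast
    then have "collapse L p y \<in> B" "collapse L p y \<in> C" using collapse_widen_block BC by auto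
    then show False using BCd by blast
  qed
qed

lemma noncrossing_widen:
  assumes P: "partition_on {1..M} P" and nc: "noncrossing P"
  shows "noncrossing (widen L p P)"
proof (rule noncrossingI)
  fix x y z w B1 B2
  assume B: "B1 \<in> widen L p P" "B2 \<in> widen L p P" "B1 \<noteq> B2" "x < y" "y < z" "z < w"
    "x \<in> B1" "z \<in> B1" "y \<in> B2" "w \<in> B2"
  obtain C1 C2 where C: "C1 \<in> P" "C2 \<in> P" "B1 = widen_block L p C1" "B2 = widen_block L p C2"
    using B unfolding widen_def by blast
  have ne: "C1 \<noteq> C2" using C B by auto
  have d: "C1 \<inter> C2 = {}" using P C ne unfolding partition_on_def disjoint_def by blast
  have m: "collapse L p x \<in> C1" "collapse L p z \<in> C1" "collapse L p y \<in> C2" "collapse L p w \<in> C2"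
    using B C collapse_widen_block by auto
  have "collapse L p x \<noteq> collapse L p y" "collapse L p y \<noteq> collapse L p z" "collapse L p z \<noteq> collapse L p w"
    using m d by auto
  moreover have "collapse L p x \<le> collapse L p y" "collapse L p y \<le> collapse L p z" "collapse L p z \<le> collapse L p w"
    using B by (auto intro: collapse_mono)
  ultimately show False using noncrossingD[OF nc C(1,2) ne, of "collapse L p x" "collapse L p y" "collapse L p z" "collapse L p w"] m
    by auto
qed

lemma card_widen_block:
  assumes "finite B"
  shows "card (widen_block L p B) = card B + (if p \<in> B then L else 0)"
proof -
  have "shift_up L (p+1) ` B \<inter> {p+1..<p+1+L} = {}" using shift_up_notin[of L "p+1"] by blast
  then show ?thesis unfolding widen_block_def
    using assms by (auto simp: card_Un_disjoint card_image[OF inj_shift_up])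
qed

locale widened_block_removal =
  fixes M L p :: nat and P :: "nat set set" and B0 :: "nat set"
  assumes P: "partition_on {1..M+L} P" and B0: "B0 \<in> P" "p \<in> B0" "{p+1..<p+1+L} \<subseteq> B0"
    and p1: "1 \<le> p" and p2: "p \<le> M"
begin

abbreviation "J \<equiv> {p+1..<p+1+L}"

lemma block_disjoint_window: "B \<in> P \<Longrightarrow> B \<noteq> B0 \<Longrightarrow> B \<inter> J = {}"
  using B0 P unfolding partition_on_def disjoint_def by blast

lemma inj_on_shift_down: "inj_on (shift_down L (p+1)) ({1..M+L} - J)"
  by (rule inj_on_inverseI[where g = "shift_up L (p+1)"]) (auto simp: shift_up_shift_down)

lemma inj_on_shift_down_block: "B \<in> P \<Longrightarrow> inj_on (shift_down L (p+1)) (B - J)"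
  by (rule inj_on_subset[OF inj_on_shift_down]) (use partition_on_block_subset[OF P] in blast)

lemma shift_up_narrow_block: "B \<in> P \<Longrightarrow> shift_up L (p+1) ` (narrow_block L p B) = B - J"
  unfolding narrow_block_def by (rule shift_up_shift_down_image) blast

lemma mem_narrow_block_iff: "B \<in> P \<Longrightarrow> p \<in> narrow_block L p B \<longleftrightarrow> B = B0"
proof
  assume "B \<in> P" "p \<in> narrow_block L p B"
  then obtain y where "y \<in> B - J" "p = shift_down L (p+1) y" unfolding narrow_block_def by blast
  then have "y = p" by (auto simp: shift_down_def split: if_splits)
  then show "B = B0" using \<open>y \<in> B - J\<close> \<open>B \<in> P\<close> partition_on_same_block[OF P _ B0(1)] B0 by blast
next
  assume "B = B0"
  then show "p \<in> narrow_block L p B" unfolding narrow_block_def using B0 by (force simp: shift_down_def)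
qed

lemma widen_narrow: "P = widen L p (narrow L p P)"
proof -
  have "widen_block L p (narrow_block L p B) = B" if "B \<in> P" for B
  proof -
    have "widen_block L p (narrow_block L p B) = (B - J) \<union> (if B = B0 then J else {})"
      unfolding widen_block_def using shift_up_narrow_block[OF that] mem_narrow_block_iff[OF that] by simp
    also have "\<dots> = B" using B0 block_disjoint_window[OF that] by auto
    finally show ?thesis .
  qed
  then show ?thesis unfolding widen_def narrow_def image_image by simp
qed

lemma partition_on_narrow: "partition_on {1..M} (narrow L p P)"
proof -
  have P1: "partition_on ((-J) \<inter> {1..M+L}) ((\<inter>) (-J) ` P - {{}})"
    by (rule partition_on_restrict[OF P])
  have "(\<inter>) (-J) ` P - {{}} = (\<lambda>B. B - J) ` P"
  proof -
    have "B - J \<noteq> {}" if "B \<in> P" for B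
    proof (cases "B = B0")
      case True then show ?thesis using B0 by auto
    next
      case False then show ?thesis using block_disjoint_window[OF that] partition_on_block_nonempty[OF P that] by auto
    qed
    then show ?thesis by (auto simp: Diff_eq Int_commute)
  qed
  moreover have "(-J) \<inter> {1..M+L} = {1..M+L} - J" by auto
  ultimately have P2: "partition_on ({1..M+L} - J) ((\<lambda>B. B - J) ` P)" using P1 by simp
  from partition_on_inj_image[OF P2 inj_on_shift_down]
  have "partition_on (shift_down L (p+1) ` ({1..M+L} - J)) ((`) (shift_down L (p+1)) ` (\<lambda>B. B - J) ` P - {{}})" .
  moreover have "shift_down L (p+1) ` ({1..M+L} - J) = {1..M}"
  proof -
    have "shift_down L (p+1) ` ({1..M+L} - J) = shift_down L (p+1) ` (shift_up L (p+1) ` {1..M})"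
      using shift_up_image[of "p+1" M L] p1 p2 by simp
    also have "\<dots> = {1..M}" by (simp add: image_image)
    finally show ?thesis .
  qed
  moreover have "(`) (shift_down L (p+1)) ` (\<lambda>B. B - J) ` P = narrow L p P"
    unfolding narrow_def narrow_block_def image_image by simp
  moreover have "{} \<notin> narrow L p P" using P2 unfolding partition_on_def narrow_def narrow_block_def by auto
  ultimately show ?thesis by simp
qed

lemma card_narrow_block: "B \<in> P \<Longrightarrow> card (narrow_block L p B) = card B - (if B = B0 then L else 0)"
proof -
  assume B: "B \<in> P"
  have fin: "finite B" using partition_on_block_subset[OF P B] finite_subset by blast
  have "card (narrow_block L p B) = card (B - J)" unfolding narrow_block_def using card_image[OF inj_on_shift_down_block[OF B]] .
  also have "\<dots> = card B - (if B = B0 then L else 0)"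
  proof (cases "B = B0")
    case True
    then show ?thesis using card_Diff_subset[OF _ B0(3)] fin by simp
  next
    case False
    then show ?thesis using block_disjoint_window[OF B] by (simp add: Diff_triv)
  qed
  finally show ?thesis .
qed

lemma noncrossing_narrow: "noncrossing P \<Longrightarrow> noncrossing (narrow L p P)"
proof (rule noncrossingI)
  fix x y z w B1 B2
  assume nc: "noncrossing P"
  assume B: "B1 \<in> narrow L p P" "B2 \<in> narrow L p P" "B1 \<noteq> B2" "x < y" "y < z" "z < w"
    "x \<in> B1" "z \<in> B1" "y \<in> B2" "w \<in> B2"
  obtain C1 where C1: "C1 \<in> P" "B1 = narrow_block L p C1" using B unfolding narrow_def by auto
  obtain C2 where C2: "C2 \<in> P" "B2 = narrow_block L p C2" using B unfolding narrow_def by auto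
  have "shift_up L (p+1) ` B1 \<subseteq> C1" "shift_up L (p+1) ` B2 \<subseteq> C2" using shift_up_narrow_block C1 C2 by auto
  then have "shift_up L (p+1) x \<in> C1" "shift_up L (p+1) z \<in> C1" "shift_up L (p+1) y \<in> C2" "shift_up L (p+1) w \<in> C2" using B by auto
  moreover have "C1 \<noteq> C2" using B C1 C2 by auto
  ultimately show False
    using noncrossingD[OF nc C1(1) C2(1), of "shift_up L (p+1) x" "shift_up L (p+1) y" "shift_up L (p+1) z" "shift_up L (p+1) w"] B
    by auto
qed

end

lemma narrow_widen: "narrow L p (widen L p X) = X"
proof -
  have "narrow_block L p (widen_block L p B) = B" for B
  proof -
    have "widen_block L p B - {p+1..<p+1+L} = shift_up L (p+1) ` B"
      using shift_up_notin[of L "p+1"] unfolding widen_block_def by auto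
    then show ?thesis unfolding narrow_block_def by (simp add: image_image)
  qed
  then show ?thesis unfolding narrow_def widen_def image_image by simp
qed

lemma NC_upper_widen:
  assumes k: "0 < k" and S: "\<sigma> \<in> NC_upper k n" and p: "1 \<le> p" "p \<le> k*n"
  shows "widen k p \<sigma> \<in> NC_upper k (Suc n)"
proof -
  have P: "partition_on {1..k*n} \<sigma>" and nc: "noncrossing \<sigma>" and cd: "\<forall>B\<in>\<sigma>. k dvd card B"
    using S unfolding NC_upper_def by auto
  have "partition_on {1..k*n+k} (widen k p \<sigma>)" using partition_on_widen[OF P p] .
  moreover have "\<forall>B\<in>widen k p \<sigma>. k dvd card B"
  proof
    fix B assume "B \<in> widen k p \<sigma>"
    then obtain C where C: "C \<in> \<sigma>" "B = widen_block k p C" unfolding widen_def by blast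
    have "finite C" using partition_on_block_subset[OF P C(1)] finite_subset by blast
    then have "card B = card C + (if p \<in> C then k else 0)" using card_widen_block C by simp
    then show "k dvd card B" using cd C(1) by simp
  qed
  ultimately show ?thesis using noncrossing_widen[OF P nc] unfolding NC_upper_def by (simp add: algebra_simps)
qed

lemma NC_upper_narrow:
  assumes k: "0 < k" and S: "\<sigma> \<in> NC_upper k (Suc n)" and B0: "B0 \<in> \<sigma>" "{p..<p+1+k} \<subseteq> B0"
    and p: "1 \<le> p" "p \<le> k*n"
  shows "narrow k p \<sigma> \<in> NC_upper k n \<and> \<sigma> = widen k p (narrow k p \<sigma>)"
proof -
  have P: "partition_on {1..k*n + k} \<sigma>" and nc: "noncrossing \<sigma>" and cd: "\<forall>B\<in>\<sigma>. k dvd card B"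
    using S unfolding NC_upper_def by (auto simp: algebra_simps)
  interpret R: widened_block_removal "k*n" k p \<sigma> B0
    by unfold_locales (use P B0 p in auto)
  have "\<forall>B\<in>narrow k p \<sigma>. k dvd card B"
  proof
    fix C assume "C \<in> narrow k p \<sigma>"
    then obtain B where B: "B \<in> \<sigma>" "C = narrow_block k p B" unfolding narrow_def by blast
    then have "card C = card B - (if B = B0 then k else 0)" using R.card_narrow_block by simp
    then show "k dvd card C" using cd B(1) by (simp add: dvd_diff_nat)
  qed
  then show ?thesis using R.partition_on_narrow R.noncrossing_narrow[OF nc] R.widen_narrow unfolding NC_upper_def by auto
qed

section \<open>The map phi\<close>

lemma segment_decomp: "1 \<le> (x::nat) \<Longrightarrow> 0 < m \<Longrightarrow> \<exists>q t. x = q*m + t \<and> 1 \<le> t \<and> t \<le> m"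
proof -
  assume "1 \<le> x" "0 < m"
  have "x - 1 = (x-1) div m * m + (x-1) mod m" by simp
  moreover have "(x-1) mod m < m" using \<open>0 < m\<close> by simp
  ultimately show ?thesis using \<open>1 \<le> x\<close> by (intro exI[of _ "(x-1) div m"] exI[of _ "(x-1) mod m + 1"]) auto
qed

lemma mult_add_le_of_less: "(q::nat) < j \<Longrightarrow> q*c + c \<le> j*c"
proof -
  assume "q < j"
  then have "Suc q * c \<le> j * c" by (intro mult_le_mono1) simp
  then show ?thesis by simp
qed

lemma segment_less_iff:
  assumes "1 \<le> t" "t \<le> m" "1 \<le> r" "r \<le> (m::nat)"
  shows "q*m + t < j*m + r \<longleftrightarrow> q < j \<or> (q = j \<and> t < r)"
proof -
  have "q < j \<Longrightarrow> q*m + t < j*m + r" using mult_add_le_of_less[of q j m] assms by linarith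
  moreover have "j < q \<Longrightarrow> \<not> q*m + t < j*m + r" using mult_add_le_of_less[of j q m] assms by linarith
  ultimately show ?thesis by (cases q j rule: linorder_cases) auto
qed

lemma segment_eq_iff:
  assumes "1 \<le> t" "t \<le> m" "1 \<le> r" "r \<le> (m::nat)"
  shows "q*m + t = j*m + r \<longleftrightarrow> q = j \<and> t = r"
  using segment_less_iff[OF assms, of q j] segment_less_iff[OF assms(3,4,1,2), of j q] by (cases q j rule: linorder_cases) auto

lemma phi_segment:
  assumes "1 \<le> t" "t \<le> k+1" "q*(k+1) + t < n*(k+1)"
  shows "phi k n (q*(k+1) + t) = q*k + t"
proof -
  have "(q*(k+1) + t - 1) div (k+1) = q"
    by (rule div_nat_eqI) (use assms in \<open>auto simp: algebra_simps\<close>)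
  then show ?thesis using assms unfolding phi_def by simp
qed

lemma phi_last: "phi k n (n*(k+1)) = 1"
  unfolding phi_def by simp

lemma phi_in_range:
  assumes "x \<in> {1..n*(k+1)}" "0 < k"
  shows "phi k n x \<in> {1..k*n}"
proof (cases "x = n*(k+1)")
  case True
  have "1 \<le> n" using assms True by (cases n) auto
  then have "1 \<le> k*n" using assms by simp
  moreover have "phi k n x = 1" using True phi_last[of k n] by simp
  ultimately show ?thesis by simp
next
  case False
  obtain q t where qt: "x = q*(k+1) + t" "1 \<le> t" "t \<le> k+1" using segment_decomp[of x "k+1"] assms by auto
  have xl: "x < n*(k+1)" using False assms by auto
  have ph: "phi k n x = q*k + t" using phi_segment[OF qt(2,3)] qt(1) xl by simp
  have "q < n"
  proof (rule ccontr)
    assume "\<not> q < n"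
    then have "n*(k+1) \<le> q*(k+1)" by (intro mult_le_mono1) simp
    then show False using xl qt by linarith
  qed
  show ?thesis
  proof (cases "q + 1 = n")
    case True
    then have "t \<le> k" using xl qt by (auto simp: algebra_simps)
    then show ?thesis using ph qt True by (auto simp: algebra_simps)
  next
    case False
    then have "q < n - 1" using \<open>q < n\<close> by simp
    then have "q*k + k \<le> (n-1)*k" by (rule mult_add_le_of_less)
    moreover have "(n-1)*k + k = k*n" using \<open>q < n\<close> by (cases n) (auto simp: algebra_simps)
    ultimately show ?thesis using ph qt assms by auto
  qed
qed

lemma segment_decomp_phi:
  assumes "x \<in> {1..n*(k+1)}" "x \<noteq> n*(k+1)"
  obtains q t where "x = q*(k+1) + t" "1 \<le> t" "t \<le> k+1" "x < n*(k+1)" "phi k n x = q*k + t"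
proof -
  obtain q t where qt: "x = q*(k+1) + t" "1 \<le> t" "t \<le> k+1" using segment_decomp[of x "k+1"] assms by auto
  have xl: "x < n*(k+1)" using assms by auto
  show ?thesis using that[OF qt xl] phi_segment[OF qt(2,3)] qt(1) xl by simp
qed

lemma phi_eq_cases:
  assumes "u < w" "u \<in> {1..n*(k+1)}" "w \<in> {1..n*(k+1)}" "phi k n u = phi k n w" "0 < k"
  shows "(w = u+1 \<and> (k+1) dvd u) \<or> (u = 1 \<and> w = n*(k+1))"
proof -
  have ul: "u < n*(k+1)" using assms by auto
  obtain q t where qt: "u = q*(k+1) + t" "1 \<le> t" "t \<le> k+1" using segment_decomp[of u "k+1"] assms by auto
  have pu: "phi k n u = q*k + t" using phi_segment[OF qt(2,3)] qt(1) ul by simp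
  show ?thesis
  proof (cases "w = n*(k+1)")
    case True
    then have "q*k + t = 1" using pu assms phi_last by simp
    then have qk: "q*k = 0" and "t = 1" using qt(2) by linarith+
    from qk \<open>0 < k\<close> have "q = 0" by simp
    then show ?thesis using True qt \<open>t = 1\<close> by simp
  next
    case False
    then have wl: "w < n*(k+1)" using assms by auto
    obtain q' t' where qt': "w = q'*(k+1) + t'" "1 \<le> t'" "t' \<le> k+1" using segment_decomp[of w "k+1"] assms by auto
    have pw: "phi k n w = q'*k + t'" using phi_segment[OF qt'(2,3)] qt'(1) wl by simp
    have e: "q*k + t = q'*k + t'" using pu pw assms by simp
    have "q < q' \<or> (q = q' \<and> t < t')" using segment_less_iff[OF qt(2,3) qt'(2,3), of q q'] assms qt qt' by simp
    then show ?thesis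
    proof
      assume "q = q' \<and> t < t'" then show ?thesis using e by simp
    next
      assume qq: "q < q'"
      then have "q*k + k \<le> q'*k" by (rule mult_add_le_of_less)
      then have tm: "t = k+1" using e qt qt' by linarith
      have "q' = q + 1"
      proof (rule ccontr)
        assume "q' \<noteq> q+1"
        then have "q + 1 < q'" using qq by simp
        then have "(q+1)*k + k \<le> q'*k" by (rule mult_add_le_of_less)
        then show False using e tm qt' assms(5) by (simp add: algebra_simps)
      qed
      then have "t' = 1" using e tm by (simp add: algebra_simps)
      then have "w = u + 1" using qt qt' tm \<open>q' = q+1\<close> by (simp add: algebra_simps)
      moreover have "u = (q+1)*(k+1)" using qt tm by (simp add: algebra_simps)
      then have "(k+1) dvd u" by (metis dvd_triv_right)
      ultimately show ?thesis by simp
    qed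
  qed
qed

definition phi_separated :: "nat \<Rightarrow> nat \<Rightarrow> nat set \<Rightarrow> bool" where
  "phi_separated k n R \<longleftrightarrow> (\<forall>u\<in>R. \<forall>w\<in>{1..n*(k+1)} - R. phi k n u \<noteq> phi k n w)"

text \<open>phi glues only the pairs \<open>u, u+1\<close> with \<open>(k+1) dvd u\<close> and the pair \<open>1, n(k+1)\<close>, so a set
  that none of these pairs straddles is not glued to its complement.\<close>

lemma phi_separatedI:
  assumes k: "0 < k" and R: "R \<subseteq> {1..n*(k+1)}"
    and step: "\<And>u. u \<in> {1..<n*(k+1)} \<Longrightarrow> (k+1) dvd u \<Longrightarrow> u \<in> R \<longleftrightarrow> u+1 \<in> R"
    and wrap: "1 \<in> R \<longleftrightarrow> n*(k+1) \<in> R"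
  shows "phi_separated k n R"
  unfolding phi_separated_def
proof (intro ballI notI)
  fix u w assume u: "u \<in> R" and w: "w \<in> {1..n*(k+1)} - R" and e: "phi k n u = phi k n w"
  have uN: "u \<in> {1..n*(k+1)}" using u R by blast
  have "u \<noteq> w" using u w by blast
  then consider "u < w" | "w < u" by linarith
  then show False
  proof cases
    case 1
    from phi_eq_cases[OF 1 uN _ e k] w consider "w = u+1" "(k+1) dvd u" | "u = 1" "w = n*(k+1)"
      by blast
    then show False
    proof cases
      case 1 then show False using step[of u] u w uN \<open>u < w\<close> by auto
    qed (use wrap u w in auto)
  next
    case 2
    from phi_eq_cases[OF 2 _ uN e[symmetric] k] w consider "u = w+1" "(k+1) dvd w" | "w = 1" "u = n*(k+1)"
      by blast
    then show False
    proof cases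
      case 1 then show False using step[of w] u w uN \<open>w < u\<close> by auto
    qed (use wrap u w in auto)
  qed
qed

lemma phi_shift_up:
  assumes k: "0<k" and j: "j < n" and r: "2 \<le> r" "r \<le> k+1" and x: "x \<in> {1..n*(k+1)}"
  shows "phi k (Suc n) (shift_up (k+1) (j*(k+1)+r) x) = shift_up k (j*k+r) (phi k n x)"
proof (cases "x = n*(k+1)")
  case True
  have "j*(k+1) + (k+1) \<le> n*(k+1)" using mult_add_le_of_less[OF j, of "k+1"] by (simp add: algebra_simps)
  then have "\<not> x < j*(k+1)+r" using True r by simp
  then have "shift_up (k+1) (j*(k+1)+r) x = Suc n * (k+1)" using True by (simp add: shift_up_def)
  moreover have "phi k n x = 1" using True phi_last[of k n] by simp
  moreover have "phi k (Suc n) (Suc n * (k+1)) = 1" by (rule phi_last)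
  moreover have "shift_up k (j*k+r) 1 = 1" using r by (simp add: shift_up_def)
  ultimately show ?thesis by simp
next
  case False
  from segment_decomp_phi[OF x False] obtain q t where qt: "x = q*(k+1) + t" "1 \<le> t" "t \<le> k+1"
    "x < n*(k+1)" "phi k n x = q*k + t" .
  have cmp: "x < j*(k+1)+r \<longleftrightarrow> q < j \<or> (q = j \<and> t < r)"
    using segment_less_iff[OF qt(2,3), of r q j] r qt(1) by simp
  show ?thesis
  proof (cases "x < j*(k+1)+r")
    case True
    have "x < Suc n * (k+1)" using qt by simp
    then have p1: "phi k (Suc n) x = q*k + t" using phi_segment[OF qt(2,3), of q "Suc n"] qt(1) by simp
    have "q*k + t < j*k + r"
    proof (cases "q < j")
      case True then show ?thesis using mult_add_le_of_less[OF True, of k] qt r by linarith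
    next
      case False then show ?thesis using cmp \<open>x < j*(k+1)+r\<close> by auto
    qed
    then show ?thesis using True p1 qt by (simp add: shift_up_def)
  next
    case False
    have e: "shift_up (k+1) (j*(k+1)+r) x = (q+1)*(k+1) + t" using False qt by (simp add: shift_up_def)
    have "(q+1)*(k+1) + t < Suc n * (k+1)" using qt by simp
    then have p1: "phi k (Suc n) ((q+1)*(k+1) + t) = (q+1)*k + t" using phi_segment[OF qt(2,3)] by blast
    have "\<not> q*k + t < j*k + r"
    proof (cases "j < q")
      case True then show ?thesis using mult_add_le_of_less[OF True, of k] qt r by linarith
    next
      case False then show ?thesis using cmp \<open>\<not> x < j*(k+1)+r\<close> by auto
    qed
    then show ?thesis using e p1 qt by (simp add: shift_up_def algebra_simps)
  qed
qed

lemma phi_image_shift_up: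
  assumes k: "0 < k" and j: "j < n" and r: "2 \<le> r" "r \<le> k+1" and V: "V \<subseteq> {1..n*(k+1)}"
  shows "phi k (Suc n) ` shift_up (k+1) (j*(k+1)+r) ` V = shift_up k (j*k+r) ` phi k n ` V"
  using phi_shift_up[OF k j r] V unfolding image_image by (intro image_cong) auto

lemma phi_shift_up_at_segment:
  assumes k: "0<k" and j: "j < n" and x: "x \<in> {1..n*(k+1)}" "x \<noteq> j*(k+1)+1"
  shows "phi k (Suc n) (shift_up (k+1) (j*(k+1)+1) x) = shift_up k (j*k+2) (phi k n x)"
proof (cases "x = n*(k+1)")
  case True
  have "j*(k+1) + (k+1) \<le> n*(k+1)" using mult_add_le_of_less[OF j, of "k+1"] by (simp add: algebra_simps)
  then have "\<not> x < j*(k+1)+1" using True k by simp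
  then have "shift_up (k+1) (j*(k+1)+1) x = Suc n * (k+1)" using True by (simp add: shift_up_def)
  moreover have "phi k n x = 1" using True phi_last[of k n] by simp
  moreover have "phi k (Suc n) (Suc n * (k+1)) = 1" by (rule phi_last)
  moreover have "shift_up k (j*k+2) 1 = 1" by (simp add: shift_up_def)
  ultimately show ?thesis by simp
next
  case False
  from segment_decomp_phi[OF x(1) False] obtain q t where qt: "x = q*(k+1) + t" "1 \<le> t" "t \<le> k+1"
    "x < n*(k+1)" "phi k n x = q*k + t" .
  have cmp: "x < j*(k+1)+1 \<longleftrightarrow> q < j"
    using segment_less_iff[OF qt(2,3), of 1 q j] qt(1,2) by simp
  have cmpe: "x = j*(k+1)+1 \<longleftrightarrow> q = j \<and> t = 1"
    using segment_eq_iff[OF qt(2,3), of 1 q j] qt(1) by simp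
  show ?thesis
  proof (cases "x < j*(k+1)+1")
    case True
    have "x < Suc n * (k+1)" using qt by simp
    then have p1: "phi k (Suc n) x = q*k + t" using phi_segment[OF qt(2,3), of q "Suc n"] qt(1) by simp
    have "q*k + t < j*k + 2"
      using mult_add_le_of_less[of q j k] cmp True qt by linarith
    then show ?thesis using True p1 qt by (simp add: shift_up_def)
  next
    case False
    have e: "shift_up (k+1) (j*(k+1)+1) x = (q+1)*(k+1) + t" using False qt by (simp add: shift_up_def)
    have "(q+1)*(k+1) + t < Suc n * (k+1)" using qt by simp
    then have p1: "phi k (Suc n) ((q+1)*(k+1) + t) = (q+1)*k + t" using phi_segment[OF qt(2,3)] by blast
    have "\<not> q*k + t < j*k + 2"
    proof (cases "j < q")
      case True then show ?thesis using mult_add_le_of_less[OF True, of k] qt k by linarith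
    next
      case False
      then have "q = j" using cmp \<open>\<not> x < j*(k+1)+1\<close> by auto
      then have "t \<noteq> 1" using cmpe x(2) by auto
      then show ?thesis using \<open>q = j\<close> qt by simp
    qed
    then show ?thesis using e p1 qt by (simp add: shift_up_def algebra_simps)
  qed
qed

lemma phi_segment_start:
  assumes k: "0<k" and j: "j < n"
  shows "phi k n (j*(k+1)+1) = j*k+1"
    and "phi k (Suc n) (shift_up (k+1) (j*(k+1)+1) (j*(k+1)+1)) = j*k+1+k"
proof -
  have "j*(k+1) + (k+1) \<le> n*(k+1)" using mult_add_le_of_less[OF j, of "k+1"] by (simp add: algebra_simps)
  then have "j*(k+1)+1 < n*(k+1)" using k by simp
  then show "phi k n (j*(k+1)+1) = j*k+1" using phi_segment[of 1 k j n] by simp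
  have "(j+1)*(k+1)+1 < Suc n*(k+1)" using \<open>j*(k+1) + (k+1) \<le> n*(k+1)\<close> k by simp
  then have "phi k (Suc n) ((j+1)*(k+1)+1) = (j+1)*k+1" using phi_segment[of 1 k "j+1" "Suc n"] by simp
  then show "phi k (Suc n) (shift_up (k+1) (j*(k+1)+1) (j*(k+1)+1)) = j*k+1+k"
    by (simp add: shift_up_def algebra_simps)
qed

lemma phi_shift_up_mem_widen_block:
  assumes k: "0 < k" and j: "j < n" and x: "x \<in> {1..n*(k+1)}" and C: "phi k n x \<in> C"
  shows "phi k (Suc n) (shift_up (k+1) (j*(k+1)+1) x) \<in> widen_block k (j*k+1) C"
proof (cases "x = j*(k+1)+1")
  case True
  then have "j*k+1 \<in> C" using C phi_segment_start(1)[OF k j] by simp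
  moreover have "phi k (Suc n) (shift_up (k+1) (j*(k+1)+1) x) = j*k+1+k"
    using True phi_segment_start(2)[OF k j] by simp
  ultimately show ?thesis using k by (simp add: widen_block_def)
next
  case False
  then show ?thesis using phi_shift_up_at_segment[OF k j x False] C by (simp add: widen_block_def)
qed

lemma phi_image_interval:
  assumes k: "0<k" and j: "j < n" and r: "2 \<le> r" "r \<le> k+1"
  shows "phi k (Suc n) ` {j*(k+1)+r ..< j*(k+1)+r+(k+1)} = {j*k+r ..< j*k+r+k}"
proof
  have jn: "j*(k+1) + (k+1) \<le> n*(k+1)" using mult_add_le_of_less[OF j, of "k+1"] by (simp add: algebra_simps)
  show "phi k (Suc n) ` {j*(k+1)+r ..< j*(k+1)+r+(k+1)} \<subseteq> {j*k+r ..< j*k+r+k}"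
  proof
    fix y assume "y \<in> phi k (Suc n) ` {j*(k+1)+r ..< j*(k+1)+r+(k+1)}"
    then obtain x where x: "x \<in> {j*(k+1)+r ..< j*(k+1)+r+(k+1)}" "y = phi k (Suc n) x" by blast
    show "y \<in> {j*k+r ..< j*k+r+k}"
    proof (cases "x < (j+1)*(k+1) + 1")
      case True
      define t where "t = x - j*(k+1)"
      have t: "x = j*(k+1) + t" "1 \<le> t" "t \<le> k+1" using x True r unfolding t_def by (auto simp: algebra_simps)
      have "x < Suc n * (k+1)" using True jn by simp
      then have "y = j*k + t" using phi_segment[OF t(2,3), of j "Suc n"] t(1) x by simp
      then show ?thesis using t x r by auto
    next
      case False
      define t where "t = x - (j+1)*(k+1)"
      have t: "x = (j+1)*(k+1) + t" "1 \<le> t" "t \<le> k+1" "t < r" using x False r unfolding t_def by (auto simp: algebra_simps)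
      have "x < Suc n * (k+1)" using x jn r by (simp add: algebra_simps)
      then have "y = (j+1)*k + t" using phi_segment[OF t(2,3), of "j+1" "Suc n"] t(1) x by simp
      then show ?thesis using t x r by auto
    qed
  qed
  show "{j*k+r ..< j*k+r+k} \<subseteq> phi k (Suc n) ` {j*(k+1)+r ..< j*(k+1)+r+(k+1)}"
  proof
    fix y assume y: "y \<in> {j*k+r ..< j*k+r+k}"
    show "y \<in> phi k (Suc n) ` {j*(k+1)+r ..< j*(k+1)+r+(k+1)}"
    proof (cases "y \<le> j*k + k + 1")
      case True
      define t where "t = y - j*k"
      have t: "1 \<le> t" "t \<le> k+1" "r \<le> t" "y = j*k+t" using y True r unfolding t_def by auto
      have "j*(k+1) + t < Suc n * (k+1)" using jn t by simp
      then have "phi k (Suc n) (j*(k+1) + t) = y" using phi_segment[OF t(1,2), of j "Suc n"] t by simp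
      moreover have "j*(k+1) + t \<in> {j*(k+1)+r ..< j*(k+1)+r+(k+1)}" using t r by auto
      ultimately show ?thesis by (metis image_eqI)
    next
      case False
      define t where "t = y - j*k - k"
      have t: "1 \<le> t" "t \<le> k+1" "t < r" "y = (j+1)*k+t" using y False r unfolding t_def by auto
      have "(j+1)*(k+1) + t < Suc n * (k+1)" using jn t r by (simp add: algebra_simps)
      then have "phi k (Suc n) ((j+1)*(k+1) + t) = y" using phi_segment[OF t(1,2), of "j+1" "Suc n"] t by simp
      moreover have "(j+1)*(k+1) + t \<in> {j*(k+1)+r ..< j*(k+1)+r+(k+1)}" using t r by (auto simp: algebra_simps)
      ultimately show ?thesis by (metis image_eqI)
    qed
  qed
qed

lemma phi_image_segment:
  assumes k: "0<k" and j: "j < n"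
  shows "phi k (Suc n) ` {j*(k+1)+1 ..< j*(k+1)+1+(k+1)} = {j*k+1 ..< j*k+1+1+k}"
proof
  have jn: "j*(k+1) + (k+1) \<le> n*(k+1)" using mult_add_le_of_less[OF j, of "k+1"] by (simp add: algebra_simps)
  show "phi k (Suc n) ` {j*(k+1)+1 ..< j*(k+1)+1+(k+1)} \<subseteq> {j*k+1 ..< j*k+1+1+k}"
  proof
    fix y assume "y \<in> phi k (Suc n) ` {j*(k+1)+1 ..< j*(k+1)+1+(k+1)}"
    then obtain x where x: "x \<in> {j*(k+1)+1 ..< j*(k+1)+1+(k+1)}" "y = phi k (Suc n) x" by blast
    define t where "t = x - j*(k+1)"
    have t: "x = j*(k+1) + t" "1 \<le> t" "t \<le> k+1" using x unfolding t_def by (auto simp: algebra_simps)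
    have "x < Suc n * (k+1)" using x jn by simp
    then have "y = j*k + t" using phi_segment[OF t(2,3), of j "Suc n"] t(1) x by simp
    then show "y \<in> {j*k+1 ..< j*k+1+1+k}" using t by auto
  qed
  show "{j*k+1 ..< j*k+1+1+k} \<subseteq> phi k (Suc n) ` {j*(k+1)+1 ..< j*(k+1)+1+(k+1)}"
  proof
    fix y assume y: "y \<in> {j*k+1 ..< j*k+1+1+k}"
    define t where "t = y - j*k"
    have t: "1 \<le> t" "t \<le> k+1" "y = j*k+t" using y unfolding t_def by auto
    have "j*(k+1) + t < Suc n * (k+1)" using jn t by simp
    then have "phi k (Suc n) (j*(k+1) + t) = y" using phi_segment[OF t(1,2), of j "Suc n"] t by simp
    moreover have "j*(k+1) + t \<in> {j*(k+1)+1 ..< j*(k+1)+1+(k+1)}" using t by auto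
    ultimately show "y \<in> phi k (Suc n) ` {j*(k+1)+1 ..< j*(k+1)+1+(k+1)}" by (metis image_eqI)
  qed
qed

lemma phi_preimage_interval:
  assumes k: "0<k" and j: "Suc j < n" and r: "2 \<le> r" "r \<le> k+1"
    and x: "x \<in> {1..n*(k+1)}" and px: "phi k n x \<in> {j*k+r ..< j*k+r+k}"
  shows "x \<in> {j*(k+1)+r ..< j*(k+1)+r+(k+1)}"
proof (cases "x = n*(k+1)")
  case True then show ?thesis using px r phi_last[of k n] by simp
next
  case False
  from segment_decomp_phi[OF x False] obtain q t where qt: "x = q*(k+1) + t" "1 \<le> t" "t \<le> k+1"
    "x < n*(k+1)" "phi k n x = q*k + t" .
  have q1: "\<not> q < j" using mult_add_le_of_less[of q j k] px qt r by auto
  have q2: "\<not> j + 1 < q" using mult_add_le_of_less[of "j+1" q k] px qt r by (auto simp: algebra_simps)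
  consider "q = j" | "q = j+1" using q1 q2 by linarith
  then show ?thesis
  proof cases
    case 1 then show ?thesis using qt px by auto
  next
    case 2 then show ?thesis using qt px by (auto simp: algebra_simps)
  qed
qed

section \<open>Finest compatible partitions\<close>

definition finest_compatible :: "nat \<Rightarrow> nat \<Rightarrow> nat set set \<Rightarrow> nat set set \<Rightarrow> bool" where
  "finest_compatible k n \<pi> \<sigma> \<longleftrightarrow> compatible k n \<pi> \<sigma> \<and> (\<forall>\<tau>. compatible k n \<pi> \<tau> \<longrightarrow> refines \<sigma> \<tau>)"

lemma fmap_eqI: "finest_compatible k n \<pi> \<sigma> \<Longrightarrow> fmap k n \<pi> = \<sigma>"
  unfolding fmap_def
proof (rule the_equality)
  assume f: "finest_compatible k n \<pi> \<sigma>"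
  then show "compatible k n \<pi> \<sigma> \<and> (\<forall>\<tau>. compatible k n \<pi> \<tau> \<longrightarrow> refines \<sigma> \<tau>)"
    unfolding finest_compatible_def .
  fix \<sigma>2 assume s2: "compatible k n \<pi> \<sigma>2 \<and> (\<forall>\<tau>. compatible k n \<pi> \<tau> \<longrightarrow> refines \<sigma>2 \<tau>)"
  show "\<sigma>2 = \<sigma>"
    by (rule refines_antisym[of "{1..k*n}"]) (use s2 f in \<open>auto simp: finest_compatible_def compatible_def\<close>)
qed

lemma finest_compatible_unique: "finest_compatible k n \<pi> \<sigma>1 \<Longrightarrow> finest_compatible k n \<pi> \<sigma>2 \<Longrightarrow> \<sigma>1 = \<sigma>2"
  using fmap_eqI by metis

lemma NC_lower_one:
  assumes "\<pi> \<in> NC_lower (k+1) 1"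
  shows "\<pi> = {{1..k+1}}"
proof -
  have P: "partition_on {1..k+1} \<pi>" and c: "\<forall>B\<in>\<pi>. card B = k+1" using assms unfolding NC_lower_def by auto
  have "B = {1..k+1}" if "B \<in> \<pi>" for B
    using partition_on_block_subset[OF P that] c that by (intro card_subset_eq) auto
  moreover have "\<pi> \<noteq> {}" using P unfolding partition_on_def by auto
  ultimately show ?thesis by blast
qed

lemma NC_upper_one:
  assumes "\<sigma> \<in> NC_upper k 1" "0 < k"
  shows "\<sigma> = {{1..k}}"
proof -
  have P: "partition_on {1..k} \<sigma>" and c: "\<forall>B\<in>\<sigma>. k dvd card B" using assms unfolding NC_upper_def by auto
  have "B = {1..k}" if "B \<in> \<sigma>" for B
  proof -
    have s: "B \<subseteq> {1..k}" using partition_on_block_subset[OF P that] .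
    have "B \<noteq> {}" using partition_on_block_nonempty[OF P that] .
    then have "card B > 0" using s finite_subset by (metis card_gt_0_iff finite_atLeastAtMost)
    moreover have "card B \<le> k" using card_mono[OF _ s] by simp
    ultimately have "card B = k" using c that by (meson dvd_imp_le le_antisym)
    then show ?thesis using s by (intro card_subset_eq) auto
  qed
  moreover have "\<sigma> \<noteq> {}" using P assms unfolding partition_on_def by auto
  ultimately show ?thesis by blast
qed

lemma finest_compatible_one:
  assumes "0 < k"
  shows "finest_compatible k 1 {{1..k+1}} {{1..k}}"
proof -
  have img: "phi k 1 ` {1..k+1} = {1..k}"
  proof
    show "phi k 1 ` {1..k+1} \<subseteq> {1..k}" using phi_in_range[of _ 1 k] assms by auto
    show "{1..k} \<subseteq> phi k 1 ` {1..k+1}"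
    proof
      fix y assume y: "y \<in> {1..k}"
      then have "phi k 1 y = y" unfolding phi_def by (auto simp: div_less)
      then show "y \<in> phi k 1 ` {1..k+1}" using y by force
    qed
  qed
  show ?thesis unfolding finest_compatible_def compatible_def refines_def
    using img assms by (auto simp: partition_on_space)
qed

lemma compatible_insert_interval:
  assumes k: "0 < k" and j: "j < n" and r: "2 \<le> r" "r \<le> k+1"
    and P: "partition_on {1..(k+1)*n} \<pi>" and C: "compatible k n \<pi> \<sigma>"
  shows "compatible k (Suc n) (insert_interval (k+1) (j*(k+1)+r) \<pi>) (insert_interval k (j*k+r) \<sigma>)"
  unfolding compatible_def
proof (intro conjI ballI)
  have S: "partition_on {1..k*n} \<sigma>" using C unfolding compatible_def by blast
  have "1 \<le> j*k+r" "j*k+r \<le> k*n + 1" using r mult_add_le_of_less[OF j, of k] by (auto simp: algebra_simps)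
  then show "partition_on {1..k*Suc n} (insert_interval k (j*k+r) \<sigma>)"
    using partition_on_insert_interval[OF S _ _ k] by (simp add: algebra_simps)
  fix V assume "V \<in> insert_interval (k+1) (j*(k+1)+r) \<pi>"
  then consider "V = {j*(k+1)+r..<j*(k+1)+r+(k+1)}"
    | V' where "V' \<in> \<pi>" "V = shift_up (k+1) (j*(k+1)+r) ` V'"
    unfolding insert_interval_def by blast
  then show "\<exists>B\<in>insert_interval k (j*k+r) \<sigma>. phi k (Suc n) ` V \<subseteq> B"
  proof cases
    case 1 then show ?thesis using phi_image_interval[OF k j r] unfolding insert_interval_def by auto
  next
    case 2
    obtain B where B: "B \<in> \<sigma>" "phi k n ` V' \<subseteq> B" using C 2(1) unfolding compatible_def by blast
    have "V' \<subseteq> {1..n*(k+1)}" using partition_on_block_subset[OF P 2(1)] by (simp add: algebra_simps)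
    then have "phi k (Suc n) ` V \<subseteq> shift_up k (j*k+r) ` B"
      using phi_image_shift_up[OF k j r] 2(2) B(2) by (simp add: image_mono)
    moreover have "shift_up k (j*k+r) ` B \<in> insert_interval k (j*k+r) \<sigma>"
      using B(1) unfolding insert_interval_def by blast
    ultimately show ?thesis by blast
  qed
qed

lemma compatible_delete_interval:
  assumes k: "0 < k" and j: "j < n" and r: "2 \<le> r" "r \<le> k+1"
    and P: "partition_on {1..(k+1)*n} \<pi>"
    and T: "compatible k (Suc n) (insert_interval (k+1) (j*(k+1)+r) \<pi>) \<tau>"
  shows "compatible k n \<pi> (delete_relabel (shift_down k (j*k+r)) {j*k+r..<j*k+r+k} \<tau>)"
  unfolding compatible_def
proof (intro conjI ballI)
  define b where "b = j*k+r"
  have TP: "partition_on {1..k*n + k} \<tau>" using T unfolding compatible_def by (simp add: algebra_simps)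
  have b: "1 \<le> b" "b \<le> k*n + 1"
    using r mult_add_le_of_less[OF j, of k] unfolding b_def by (auto simp: algebra_simps)
  show "partition_on {1..k*n} (delete_relabel (shift_down k b) {b..<b+k} \<tau>)"
    by (rule partition_on_delete_relabel[OF TP shift_down_bij[OF b]])
  fix V assume V: "V \<in> \<pi>"
  then have "shift_up (k+1) (j*(k+1)+r) ` V \<in> insert_interval (k+1) (j*(k+1)+r) \<pi>"
    unfolding insert_interval_def by blast
  then obtain C where C: "C \<in> \<tau>" "phi k (Suc n) ` shift_up (k+1) (j*(k+1)+r) ` V \<subseteq> C"
    using T unfolding compatible_def by blast
  have "V \<subseteq> {1..n*(k+1)}" using partition_on_block_subset[OF P V] by (simp add: algebra_simps)
  then have up: "shift_up k b ` phi k n ` V \<subseteq> C - {b..<b+k}"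
    using C(2) phi_image_shift_up[OF k j r] shift_up_notin[of k b] unfolding b_def by auto
  have "phi k n ` V = shift_down k b ` shift_up k b ` phi k n ` V" by (simp add: image_image)
  also have "\<dots> \<subseteq> shift_down k b ` (C - {b..<b+k})" using up by (rule image_mono)
  finally have sub: "phi k n ` V \<subseteq> shift_down k b ` (C - {b..<b+k})" .
  moreover have "C - {b..<b+k} \<noteq> {}" using sub partition_on_block_nonempty[OF P V] by blast
  ultimately show "\<exists>B\<in>delete_relabel (shift_down k b) {b..<b+k} \<tau>. phi k n ` V \<subseteq> B"
    using delete_relabel_memI[OF C(1)] by blast
qed

lemma finest_compatible_insert_interval:
  assumes k: "0 < k" and j: "j < n" and r: "2 \<le> r" "r \<le> k+1"
    and P: "partition_on {1..(k+1)*n} \<pi>" and F: "finest_compatible k n \<pi> \<sigma>"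
  shows "finest_compatible k (Suc n) (insert_interval (k+1) (j*(k+1)+r) \<pi>) (insert_interval k (j*k+r) \<sigma>)"
  unfolding finest_compatible_def
proof (intro conjI allI impI)
  define a where "a = j*(k+1)+r"
  define b where "b = j*k+r"
  show "compatible k (Suc n) (insert_interval (k+1) (j*(k+1)+r) \<pi>) (insert_interval k (j*k+r) \<sigma>)"
    using compatible_insert_interval[OF k j r P] F unfolding finest_compatible_def by blast
  fix \<tau> assume T: "compatible k (Suc n) (insert_interval (k+1) (j*(k+1)+r) \<pi>) \<tau>"
  have R: "refines \<sigma> (delete_relabel (shift_down k b) {b..<b+k} \<tau>)"
    using F compatible_delete_interval[OF k j r P T] unfolding finest_compatible_def b_def by blast
  show "refines (insert_interval k (j*k+r) \<sigma>) \<tau>"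
    unfolding refines_def b_def[symmetric]
  proof
    fix B assume "B \<in> insert_interval k b \<sigma>"
    then consider "B = {b..<b+k}" | B' where "B' \<in> \<sigma>" "B = shift_up k b ` B'"
      unfolding insert_interval_def by blast
    then show "\<exists>C\<in>\<tau>. B \<subseteq> C"
    proof cases
      case 1
      have "{a..<a+(k+1)} \<in> insert_interval (k+1) a \<pi>" unfolding insert_interval_def by simp
      then obtain C where "C \<in> \<tau>" "phi k (Suc n) ` {a..<a+(k+1)} \<subseteq> C"
        using T unfolding compatible_def a_def by blast
      then show ?thesis using phi_image_interval[OF k j r] 1 unfolding a_def b_def by auto
    next
      case 2
      obtain D where D: "D \<in> delete_relabel (shift_down k b) {b..<b+k} \<tau>" "B' \<subseteq> D"
        using R 2(1) unfolding refines_def by blast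
      obtain C where C: "C \<in> \<tau>" "D = shift_down k b ` (C - {b..<b+k})"
        using delete_relabel_memD[OF D(1)] by blast
      have "B \<subseteq> shift_up k b ` shift_down k b ` (C - {b..<b+k})" using 2 C D by (simp add: image_mono)
      also have "\<dots> = C - {b..<b+k}" by (rule shift_up_shift_down_image) blast
      finally show ?thesis using C by blast
    qed
  qed
qed

lemma compatible_segment_block:
  assumes k: "0 < k" and j: "j < n"
    and T: "compatible k (Suc n) (insert_interval (k+1) (j*(k+1)+1) \<pi>) \<tau>"
  obtains C0 where "C0 \<in> \<tau>" "{j*k+1..<j*k+1+1+k} \<subseteq> C0"
proof -
  have "{j*(k+1)+1..<j*(k+1)+1+(k+1)} \<in> insert_interval (k+1) (j*(k+1)+1) \<pi>"
    unfolding insert_interval_def by simp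
  then show thesis using T that phi_image_segment[OF k j] unfolding compatible_def by metis
qed

lemma compatible_widen:
  assumes k: "0 < k" and j: "j < n"
    and P: "partition_on {1..(k+1)*n} \<pi>" and C: "compatible k n \<pi> \<sigma>"
  shows "compatible k (Suc n) (insert_interval (k+1) (j*(k+1)+1) \<pi>) (widen k (j*k+1) \<sigma>)"
  unfolding compatible_def
proof (intro conjI ballI)
  define p where "p = j*k+1"
  have S: "partition_on {1..k*n} \<sigma>" using C unfolding compatible_def by blast
  have p: "1 \<le> p" "p \<le> k*n" using mult_add_le_of_less[OF j, of k] k unfolding p_def by (auto simp: algebra_simps)
  then show "partition_on {1..k*Suc n} (widen k (j*k+1) \<sigma>)"
    using partition_on_widen[OF S p] unfolding p_def by (simp add: algebra_simps)
  fix V assume "V \<in> insert_interval (k+1) (j*(k+1)+1) \<pi>"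
  then consider "V = {j*(k+1)+1..<j*(k+1)+1+(k+1)}"
    | V' where "V' \<in> \<pi>" "V = shift_up (k+1) (j*(k+1)+1) ` V'"
    unfolding insert_interval_def by blast
  then show "\<exists>B\<in>widen k (j*k+1) \<sigma>. phi k (Suc n) ` V \<subseteq> B"
  proof cases
    case 1
    obtain C0 where C0: "C0 \<in> \<sigma>" "p \<in> C0" using partition_on_ex_block[OF S] p by force
    then have "phi k (Suc n) ` V \<subseteq> widen_block k p C0"
      using 1 phi_image_segment[OF k j] atLeastLessThan_subset_widen_block[OF C0(2)] unfolding p_def by simp
    then show ?thesis using C0(1) unfolding widen_def p_def by blast
  next
    case 2
    obtain B where B: "B \<in> \<sigma>" "phi k n ` V' \<subseteq> B" using C 2(1) unfolding compatible_def by blast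
    have "V' \<subseteq> {1..n*(k+1)}" using partition_on_block_subset[OF P 2(1)] by (simp add: algebra_simps)
    then have "phi k (Suc n) ` V \<subseteq> widen_block k (j*k+1) B"
      using 2(2) B(2) phi_shift_up_mem_widen_block[OF k j] by blast
    then show ?thesis using B(1) unfolding widen_def by blast
  qed
qed

lemma compatible_narrow:
  assumes k: "0 < k" and j: "j < n"
    and P: "partition_on {1..(k+1)*n} \<pi>"
    and T: "compatible k (Suc n) (insert_interval (k+1) (j*(k+1)+1) \<pi>) \<tau>"
  shows "compatible k n \<pi> (delete_relabel (shift_down k (j*k+2)) {j*k+2..<j*k+2+k} \<tau>)"
  unfolding compatible_def
proof (intro conjI ballI)
  define a where "a = j*(k+1)+1"
  define p where "p = j*k+1"
  define J where "J = {p+1..<p+1+k}"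
  have TP: "partition_on {1..k*n + k} \<tau>" using T unfolding compatible_def by (simp add: algebra_simps)
  obtain C0 where C0: "C0 \<in> \<tau>" "{p..<p+1+k} \<subseteq> C0"
    using compatible_segment_block[OF k j T] unfolding p_def by blast
  have b: "1 \<le> p+1" "p+1 \<le> k*n + 1"
    using mult_add_le_of_less[OF j, of k] k unfolding p_def by (auto simp: algebra_simps)
  show "partition_on {1..k*n} (delete_relabel (shift_down k (j*k+2)) {j*k+2..<j*k+2+k} \<tau>)"
    using partition_on_delete_relabel[OF TP shift_down_bij[OF b]] unfolding p_def by simp
  fix V assume V: "V \<in> \<pi>"
  then have "shift_up (k+1) a ` V \<in> insert_interval (k+1) a \<pi>" unfolding insert_interval_def by blast
  then obtain C where C: "C \<in> \<tau>" "phi k (Suc n) ` shift_up (k+1) a ` V \<subseteq> C"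
    using T unfolding compatible_def a_def by blast
  have sub: "phi k n ` V \<subseteq> shift_down k (p+1) ` (C - J)"
  proof
    fix y assume "y \<in> phi k n ` V"
    then obtain x where x: "x \<in> V" "y = phi k n x" by blast
    have xN: "x \<in> {1..n*(k+1)}" using partition_on_block_subset[OF P V] x(1) by (auto simp: algebra_simps)
    have img: "phi k (Suc n) (shift_up (k+1) a x) \<in> C" using C(2) x(1) by blast
    show "y \<in> shift_down k (p+1) ` (C - J)"
    proof (cases "x = a")
      case True
      then have "p + k \<in> C" using img phi_segment_start(2)[OF k j] unfolding a_def p_def by simp
      moreover have "p + k \<in> C0" using C0 by auto
      ultimately have "C = C0" by (rule partition_on_same_block[OF TP C(1) C0(1)])
      then have "p \<in> C - J" using C0 unfolding J_def by auto
      moreover have "y = shift_down k (p+1) p"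
        using True x phi_segment_start(1)[OF k j] unfolding a_def p_def by (simp add: shift_down_def)
      ultimately show ?thesis by blast
    next
      case False
      then have "shift_up k (p+1) y \<in> C"
        using img phi_shift_up_at_segment[OF k j xN] x(2) unfolding a_def p_def by simp
      moreover have "shift_up k (p+1) y \<notin> J" unfolding J_def by (rule shift_up_notin)
      ultimately show ?thesis by (metis DiffI image_eqI shift_down_shift_up)
    qed
  qed
  moreover have "C - J \<noteq> {}" using sub partition_on_block_nonempty[OF P V] by blast
  ultimately have "\<exists>B\<in>delete_relabel (shift_down k (p+1)) J \<tau>. phi k n ` V \<subseteq> B"
    using delete_relabel_memI[OF C(1)] by blast
  then show "\<exists>B\<in>delete_relabel (shift_down k (j*k+2)) {j*k+2..<j*k+2+k} \<tau>. phi k n ` V \<subseteq> B"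
    unfolding J_def p_def by simp
qed

lemma finest_compatible_widen:
  assumes k: "0 < k" and j: "j < n"
    and P: "partition_on {1..(k+1)*n} \<pi>" and F: "finest_compatible k n \<pi> \<sigma>"
  shows "finest_compatible k (Suc n) (insert_interval (k+1) (j*(k+1)+1) \<pi>) (widen k (j*k+1) \<sigma>)"
  unfolding finest_compatible_def
proof (intro conjI allI impI)
  define p where "p = j*k+1"
  define J where "J = {p+1..<p+1+k}"
  show "compatible k (Suc n) (insert_interval (k+1) (j*(k+1)+1) \<pi>) (widen k (j*k+1) \<sigma>)"
    using compatible_widen[OF k j P] F unfolding finest_compatible_def by blast
  fix \<tau> assume T: "compatible k (Suc n) (insert_interval (k+1) (j*(k+1)+1) \<pi>) \<tau>"
  have TP: "partition_on {1..k*Suc n} \<tau>" using T unfolding compatible_def by blast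
  obtain C0 where C0: "C0 \<in> \<tau>" "{p..<p+1+k} \<subseteq> C0"
    using compatible_segment_block[OF k j T] unfolding p_def by blast
  have R: "refines \<sigma> (delete_relabel (shift_down k (p+1)) J \<tau>)"
    using F compatible_narrow[OF k j P T] unfolding finest_compatible_def J_def p_def by simp
  show "refines (widen k (j*k+1) \<sigma>) \<tau>"
    unfolding refines_def p_def[symmetric]
  proof
    fix B assume "B \<in> widen k p \<sigma>"
    then obtain B' where B': "B' \<in> \<sigma>" "B = widen_block k p B'" unfolding widen_def by blast
    obtain D where D: "D \<in> delete_relabel (shift_down k (p+1)) J \<tau>" "B' \<subseteq> D"
      using R B'(1) unfolding refines_def by blast
    obtain C where C: "C \<in> \<tau>" "D = shift_down k (p+1) ` (C - J)" using delete_relabel_memD[OF D(1)] by blast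
    have "shift_up k (p+1) ` B' \<subseteq> shift_up k (p+1) ` shift_down k (p+1) ` (C - J)"
      using C D by (simp add: image_mono)
    also have "\<dots> = C - J" unfolding J_def by (rule shift_up_shift_down_image) blast
    finally have shifted: "shift_up k (p+1) ` B' \<subseteq> C" by blast
    have "J \<subseteq> C" if pB: "p \<in> B'"
    proof -
      obtain y where y: "y \<in> C - J" "p = shift_down k (p+1) y" using pB C D by blast
      then have "y = p" unfolding J_def by (auto simp: shift_down_def split: if_splits)
      then have "p \<in> C" "p \<in> C0" using y(1) C0(2) by auto
      then have "C = C0" by (rule partition_on_same_block[OF TP C(1) C0(1)])
      then show ?thesis using C0(2) unfolding J_def by auto
    qed
    then have "B \<subseteq> C" using B'(2) shifted unfolding widen_block_def J_def by auto
    then show "\<exists>C\<in>\<tau>. B \<subseteq> C" using C(1) by blast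
  qed
qed

section \<open>Decomposing non-crossing partitions\<close>

lemma NC_lower_interval_block:
  assumes n: "0 < n" and pi: "\<pi> \<in> NC_lower (k+1) (Suc n)"
  obtains a where "{a..<a+(k+1)} \<in> \<pi>" "1 \<le> a" "a \<le> (k+1)*n"
proof -
  define N where "N = (k+1)*Suc n"
  have P: "partition_on {1..N} \<pi>" and nc: "noncrossing \<pi>" and cd: "\<forall>B\<in>\<pi>. card B = k+1"
    using pi unfolding NC_lower_def N_def by auto
  have "N \<in> {1..N}" unfolding N_def by simp
  then obtain B0 where B0: "B0 \<in> \<pi>" "N \<in> B0" using partition_on_ex_block[OF P] by blast
  have "N \<noteq> k+1" using n unfolding N_def by simp
  then have "B0 \<noteq> {1..N}" using cd B0(1) by auto
  then obtain C where C: "C \<in> \<pi>" "C \<noteq> B0" "C = {Min C..Max C}"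
    using noncrossing_interval_block[OF P nc B0 _ partition_on_other_block[OF P B0(1)]] by blast
  have fin: "finite C" using partition_on_block_subset[OF P C(1)] finite_subset by blast
  have ne: "C \<noteq> {}" using partition_on_block_nonempty[OF P C(1)] .
  define a where "a = Min C"
  have CI: "C = {a..<a+(k+1)}"
    using interval_atLeastLessThan_card[OF C(3) ne fin] cd C(1) unfolding a_def by simp
  have "N \<notin> C" using partition_on_same_block[OF P C(1) B0(1)] B0(2) C(2) by blast
  then have "a + k \<noteq> N" using CI by auto
  moreover have "a \<in> C" "a + k \<in> C" using CI by auto
  then have "1 \<le> a" "a + k \<le> N" using partition_on_block_subset[OF P C(1)] by auto
  ultimately show thesis using that[of a] C(1) CI unfolding N_def by (simp add: algebra_simps)
qed

lemma NC_lower_Suc_decomp: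
  assumes k: "0 < k" and n: "0 < n" and pi: "\<pi> \<in> NC_lower (k+1) (Suc n)"
  obtains j r \<pi>' where "j < n" "1 \<le> r" "r \<le> k+1" "\<pi>' \<in> NC_lower (k+1) n"
    "\<pi> = insert_interval (k+1) (j*(k+1)+r) \<pi>'"
proof -
  obtain a where I: "{a..<a+(k+1)} \<in> \<pi>" and a: "1 \<le> a" "a \<le> (k+1)*n"
    using NC_lower_interval_block[OF n pi] by blast
  obtain j r where jr: "a = j*(k+1) + r" "1 \<le> r" "r \<le> k+1" using segment_decomp[of a "k+1"] a(1) by auto
  have "j < n"
  proof (rule ccontr)
    assume "\<not> j < n"
    then have "n*(k+1) \<le> j*(k+1)" by (intro mult_le_mono1) simp
    then show False using a(2) jr by (simp add: algebra_simps)
  qed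
  moreover have "a \<le> (k+1)*n + 1" using a(2) by simp
  ultimately show thesis using that jr NC_lower_remove_interval[OF k pi I a(1)] by blast
qed

lemma interval_cases_by_length:
  fixes b c k n :: nat
  assumes k: "0 < k" and b: "2 \<le> b" and c: "k dvd c" "0 < c" and N: "b + c \<le> k*n + k + 1"
  obtains (single) j r where "j < n" "2 \<le> r" "r \<le> k+1" "b = j*k+r" "c = k"
    | (window) j where "j < n" "{j*k+1..<j*k+1+1+k} \<subseteq> {b..<b+c}"
proof (cases "c = k")
  case True
  define j where "j = (b-2) div k"
  define r where "r = (b-2) mod k + 2"
  have br: "b = j*k + r" unfolding j_def r_def using b div_mult_mod_eq[of "b-2" k] by linarith
  have "(b-2) mod k < k" using k by simp
  then have r: "2 \<le> r" "r \<le> k+1" unfolding r_def by auto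
  have "k*j < k*n" using N True br r mult.commute[of j k] by linarith
  then show thesis using single br r True by simp
next
  case False
  obtain q where "c = k*q" using c(1) by blast
  moreover have "q \<noteq> 0" "q \<noteq> 1" using c(2) False \<open>c = k*q\<close> by auto
  ultimately have c2: "2*k \<le> c" by (simp add: mult.commute)
  define j where "j = (b+k-2) div k"
  define s where "s = (b+k-2) mod k"
  have js: "j*k + s = b + k - 2" unfolding j_def s_def by simp
  have s: "s < k" unfolding s_def using k by simp
  have "k*j < k*n" using js s c2 b N mult.commute[of j k] by linarith
  then show thesis using window[of j] js s c2 b by fastforce
qed

lemma NC_upper_Suc_cases:
  assumes k: "0 < k" and n: "0 < n" and S: "\<sigma> \<in> NC_upper k (Suc n)"
  obtains (interval) j r where "j < n" "2 \<le> r" "r \<le> k+1" "{j*k+r..<j*k+r+k} \<in> \<sigma>"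
    | (window) j B where "j < n" "B \<in> \<sigma>" "{j*k+1..<j*k+1+1+k} \<subseteq> B"
proof -
  define N where "N = k*Suc n"
  have P: "partition_on {1..N} \<sigma>" and nc: "noncrossing \<sigma>" and cd: "\<forall>B\<in>\<sigma>. k dvd card B"
    using S unfolding NC_upper_def N_def by auto
  obtain B0 where B0: "B0 \<in> \<sigma>" "1 \<in> B0" using partition_on_ex_block[OF P, of 1] k unfolding N_def by auto
  show thesis
  proof (cases "B0 = {1..N}")
    case True
    have "k + 1 \<le> N" using n k unfolding N_def by (cases n) auto
    then have "{0*k+1..<0*k+1+1+k} \<subseteq> B0" using True by auto
    then show thesis using window[of 0 B0] n B0(1) by blast
  next
    case False
    then obtain C where C: "C \<in> \<sigma>" "C \<noteq> B0" "C = {Min C..Max C}"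
      using noncrossing_interval_block[OF P nc B0 _ partition_on_other_block[OF P B0(1)]] by blast
    have fin: "finite C" using partition_on_block_subset[OF P C(1)] finite_subset by blast
    have ne: "C \<noteq> {}" using partition_on_block_nonempty[OF P C(1)] .
    define b where "b = Min C"
    define c where "c = card C"
    have CI: "C = {b..<b+c}" using interval_atLeastLessThan_card[OF C(3) ne fin] unfolding b_def c_def by simp
    have c: "k dvd c" "0 < c" using cd C(1) fin ne unfolding c_def by (auto simp: card_gt_0_iff)
    have "1 \<notin> C" using partition_on_same_block[OF P C(1) B0(1)] B0(2) C(2) by blast
    moreover have "b \<in> C" "1 \<le> b" using partition_on_block_subset[OF P C(1)] Min_in[OF fin ne] unfolding b_def by auto
    ultimately have b: "2 \<le> b" by (cases "b = 1") auto
    have "b + c - 1 \<in> C" using CI c(2) by auto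
    then have "b + c - 1 \<le> k*n + k" using partition_on_block_subset[OF P C(1)] unfolding N_def by auto
    then have "b + c \<le> k*n + k + 1" by linarith
    then show thesis
    proof (rule interval_cases_by_length[OF k b c])
      fix j r assume "j < n" "2 \<le> r" "r \<le> k+1" "b = j*k+r" "c = k"
      then show thesis using interval[of j r] C(1) CI by simp
    next
      fix j assume "j < n" "{j*k+1..<j*k+1+1+k} \<subseteq> {b..<b+c}"
      then show thesis using window[of j C] C(1) CI by simp
    qed
  qed
qed

lemma NC_upper_Suc_decomp:
  assumes k: "0 < k" and n: "0 < n" and S: "\<sigma> \<in> NC_upper k (Suc n)"
  obtains (interval) j r \<sigma>' where "j < n" "2 \<le> r" "r \<le> k+1" "{j*k+r..<j*k+r+k} \<in> \<sigma>"
      "\<sigma>' \<in> NC_upper k n" "\<sigma> = insert_interval k (j*k+r) \<sigma>'"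
    | (window) j B \<sigma>' where "j < n" "B \<in> \<sigma>" "{j*k+1..<j*k+1+1+k} \<subseteq> B"
      "\<sigma>' \<in> NC_upper k n" "\<sigma> = widen k (j*k+1) \<sigma>'"
proof (rule NC_upper_Suc_cases[OF k n S])
  fix j r assume jr: "j < n" "2 \<le> r" "r \<le> k+1" and I: "{j*k+r..<j*k+r+k} \<in> \<sigma>"
  then have "1 \<le> j*k+r" "j*k+r \<le> k*n+1" using mult_add_le_of_less[of j n k] by (auto simp: algebra_simps)
  then show thesis using interval jr I NC_upper_remove_interval[OF k S I] by blast
next
  fix j B assume j: "j < n" and B: "B \<in> \<sigma>" "{j*k+1..<j*k+1+1+k} \<subseteq> B"
  then have "1 \<le> j*k+1" "j*k+1 \<le> k*n" using mult_add_le_of_less[of j n k] k by (auto simp: algebra_simps)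
  then show thesis using window j B NC_upper_narrow[OF k S B] by blast
qed

section \<open>Blocks of pi forced by f(pi)\<close>

lemma interval_block_forced:
  assumes k: "0<k" and j: "Suc j < n" and r: "2 \<le> r" "r \<le> k+1"
    and pi: "\<pi> \<in> NC_lower (k+1) n" and C: "compatible k n \<pi> \<sigma>" and I: "{j*k+r..<j*k+r+k} \<in> \<sigma>"
  shows "{j*(k+1)+r..<j*(k+1)+r+(k+1)} \<in> \<pi>"
proof -
  define a where "a = j*(k+1)+r"
  have P: "partition_on {1..n*(k+1)} \<pi>" and cd: "\<forall>B\<in>\<pi>. card B = k+1"
    using pi unfolding NC_lower_def by (auto simp: algebra_simps)
  have S: "partition_on {1..k*n} \<sigma>" and SC: "\<forall>V\<in>\<pi>. \<exists>B\<in>\<sigma>. phi k n ` V \<subseteq> B"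
    using C unfolding compatible_def by auto
  have jn: "(j+1)*(k+1) + (k+1) \<le> n*(k+1)" using mult_add_le_of_less[of "j+1" n "k+1"] j by simp
  have al: "a < n*(k+1)" using jn r unfolding a_def by (simp add: algebra_simps)
  have pa: "phi k n a = j*k + r" unfolding a_def using phi_segment[OF _ r(2), of j n] r al unfolding a_def by simp
  have a1: "a \<in> {1..n*(k+1)}" using al r unfolding a_def by auto
  obtain V where V: "V \<in> \<pi>" "a \<in> V" using partition_on_ex_block[OF P a1] by blast
  obtain B where B: "B \<in> \<sigma>" "phi k n ` V \<subseteq> B" using SC V by blast
  have "phi k n a \<in> B" using B V by blast
  moreover have "phi k n a \<in> {j*k+r..<j*k+r+k}" using pa k by simp
  ultimately have "B = {j*k+r..<j*k+r+k}" using partition_on_same_block[OF S B(1) I] by blast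
  then have "V \<subseteq> {a..<a+(k+1)}"
    using phi_preimage_interval[OF k j r] partition_on_block_subset[OF P V(1)] B unfolding a_def by blast
  moreover have "card V = card {a..<a+(k+1)}" using cd V by simp
  ultimately have "V = {a..<a+(k+1)}" by (intro card_subset_eq) auto
  then show ?thesis using V unfolding a_def by simp
qed

lemma separating_region_gap:
  assumes k: "0 < k" and pi: "\<pi> \<in> NC_lower (k+1) n"
    and V: "V \<in> \<pi>" "x \<in> V" "y \<in> V" "x < y" "{x<..<y} \<inter> V = {}" and x: "\<not> (k+1) dvd x"
  shows "saturated \<pi> {x<..<y} \<and> phi_separated k n {x<..<y}"
proof
  have P: "partition_on {1..n*(k+1)} \<pi>" and nc: "noncrossing \<pi>" and cd: "\<forall>B\<in>\<pi>. card B = k+1"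
    using pi unfolding NC_lower_def by (auto simp: algebra_simps)
  have x1: "1 \<le> x" and yN: "y \<le> n*(k+1)" using partition_on_block_subset[OF P V(1)] V by auto
  have RN: "{x<..<y} \<subseteq> {1..n*(k+1)}" using x1 yN by auto
  show sat: "saturated \<pi> {x<..<y}"
    unfolding saturated_def using noncrossing_block_between[OF nc P V(1-3)] V(5) by blast
  have "(k+1) dvd card {x<..<y}" using card_saturated_dvd[OF P cd _ RN sat] by simp
  then have "(k+1) dvd y - Suc x" by simp
  moreover note \<open>x < y\<close>
  ultimately have "(k+1) dvd y - 1 \<longleftrightarrow> (k+1) dvd x"
    using dvd_add_left_iff[of "k+1" "y - Suc x" x] by (simp add: add.commute)
  then have y: "\<not> (k+1) dvd y - 1" using x by blast
  show "phi_separated k n {x<..<y}"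
  proof (rule phi_separatedI[OF k RN])
    fix u assume "(k+1) dvd u"
    then have "u \<noteq> x" "u \<noteq> y - 1" using x y by auto
    then show "u \<in> {x<..<y} \<longleftrightarrow> u+1 \<in> {x<..<y}" by auto
  qed (use x1 yN in auto)
qed

lemma separating_region_wrap:
  assumes k: "0 < k" and pi: "\<pi> \<in> NC_lower (k+1) n"
    and V: "V \<in> \<pi>" "v \<in> V" "x \<in> V" "V \<subseteq> {v..x}" and x: "\<not> (k+1) dvd x" "x < n*(k+1)"
  shows "saturated \<pi> ({1..n*(k+1)} - {v..x}) \<and> phi_separated k n ({1..n*(k+1)} - {v..x})"
proof
  define N where "N = n*(k+1)"
  have P: "partition_on {1..N} \<pi>" and nc: "noncrossing \<pi>" and cd: "\<forall>B\<in>\<pi>. card B = k+1"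
    using pi unfolding NC_lower_def N_def by (auto simp: algebra_simps)
  have v1: "1 \<le> v" "v \<le> x" using partition_on_block_subset[OF P V(1)] V by auto
  show sat: "saturated \<pi> ({1..N} - {v..x})"
    unfolding saturated_def
  proof
    fix W assume W: "W \<in> \<pi>"
    show "W \<subseteq> {1..N} - {v..x} \<or> W \<inter> ({1..N} - {v..x}) = {}"
    proof (cases "W = V")
      case False
      have "v \<notin> W" "x \<notin> W" using partition_on_same_block[OF P W V(1)] V False by blast+
      then consider "W \<subseteq> {v<..<x}" | "W \<inter> {v<..<x} = {}"
        using noncrossing_block_between[OF nc P V(1-3) W False] by blast
      then show ?thesis
      proof cases
        case 2
        have "W \<subseteq> {1..N} - {v..x}"
        proof
          fix w assume w: "w \<in> W"
          then have "w \<notin> {v<..<x}" "w \<noteq> v" "w \<noteq> x" using 2 \<open>v \<notin> W\<close> \<open>x \<notin> W\<close> by auto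
          then show "w \<in> {1..N} - {v..x}" using w partition_on_block_subset[OF P W] by auto
        qed
        then show ?thesis ..
      qed auto
    qed (use V in auto)
  qed
  have "x \<le> N" using x(2) unfolding N_def by simp
  then have "card ({1..N} - {v..x}) = N - (x + 1 - v)" using v1 by (simp add: card_Diff_subset)
  then have "(k+1) dvd N - (x + 1 - v)" using card_saturated_dvd[OF P cd _ _ sat] by simp
  moreover have "N - (N - (x + 1 - v)) = x + 1 - v" using \<open>x \<le> N\<close> v1 by simp
  moreover have "(k+1) dvd N" unfolding N_def by (rule dvd_triv_right)
  ultimately have d: "(k+1) dvd x + 1 - v" by (metis dvd_diff_nat)
  have "x = (v - 1) + (x + 1 - v)" using v1 by simp
  then have "(k+1) dvd v - 1 \<longleftrightarrow> (k+1) dvd x" using dvd_add_left_iff[OF d, of "v - 1"] by simp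
  then have v: "\<not> (k+1) dvd v - 1" using x(1) by blast
  show "phi_separated k n ({1..N} - {v..x})"
    unfolding N_def
  proof (rule phi_separatedI[OF k])
    fix u assume u: "u \<in> {1..<n*(k+1)}" "(k+1) dvd u"
    then have "u \<noteq> x" "u \<noteq> v - 1" using x v by auto
    then show "u \<in> {1..n*(k+1)} - {v..x} \<longleftrightarrow> u+1 \<in> {1..n*(k+1)} - {v..x}"
      using u by auto
  qed (use v v1 x in \<open>auto simp: N_def\<close>)
qed

lemma separating_region:
  assumes k: "0 < k" and pi: "\<pi> \<in> NC_lower (k+1) n"
    and V: "V \<in> \<pi>" "x \<in> V" "x+1 \<notin> V" "x+1 \<le> n*(k+1)" and x: "\<not> (k+1) dvd x"
  obtains R where "x+1 \<in> R" "x \<notin> R" "saturated \<pi> R" "phi_separated k n R"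
proof (cases "\<exists>v\<in>V. x < v")
  case True
  define y where "y = (LEAST v. v \<in> V \<and> x < v)"
  have y: "y \<in> V" "x < y" using LeastI_ex[of "\<lambda>v. v \<in> V \<and> x < v"] True unfolding y_def by blast+
  have "{x<..<y} \<inter> V = {}" using not_less_Least[of _ "\<lambda>v. v \<in> V \<and> x < v"] unfolding y_def by auto
  then have "saturated \<pi> {x<..<y}" "phi_separated k n {x<..<y}"
    using separating_region_gap[OF k pi V(1,2) y _ x] by blast+
  moreover have "x + 1 < y" using y V(3) by (cases "y = x+1") auto
  ultimately show thesis using that[of "{x<..<y}"] by simp
next
  case False
  have fin: "finite V" and VN: "V \<subseteq> {1..n*(k+1)}"
    using pi V(1) unfolding NC_lower_def partition_on_def by (auto intro: finite_subset simp: algebra_simps)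
  have "V \<subseteq> {Min V..x}" using False fin by fastforce
  moreover have "Min V \<in> V" using fin V(2) by (auto intro: Min_in)
  moreover have "x < n*(k+1)" using V(4) by simp
  ultimately have "saturated \<pi> ({1..n*(k+1)} - {Min V..x})" "phi_separated k n ({1..n*(k+1)} - {Min V..x})"
    using separating_region_wrap[OF k pi V(1) _ V(2) _ x] by blast+
  moreover have "x + 1 \<in> {1..n*(k+1)} - {Min V..x}" "x \<notin> {1..n*(k+1)} - {Min V..x}"
    using V(4) \<open>Min V \<in> V\<close> \<open>V \<subseteq> {Min V..x}\<close> by auto
  ultimately show thesis using that by blast
qed

lemma finest_compatible_block_split:
  assumes F: "finest_compatible k n \<pi> \<sigma>" and P: "partition_on {1..n*(k+1)} \<pi>"
    and sat: "saturated \<pi> R" and sep: "phi_separated k n R" and B: "B \<in> \<sigma>"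
  shows "B \<subseteq> phi k n ` R \<or> B \<inter> phi k n ` R = {}"
proof -
  define Q where "Q = phi k n ` R"
  have S: "partition_on {1..k*n} \<sigma>" and SC: "\<forall>V\<in>\<pi>. \<exists>C\<in>\<sigma>. phi k n ` V \<subseteq> C"
    using F unfolding finest_compatible_def compatible_def by auto
  have "compatible k n \<pi> (split_by Q \<sigma>)"
    unfolding compatible_def
  proof (intro conjI ballI)
    show "partition_on {1..k*n} (split_by Q \<sigma>)" by (rule partition_on_split_by[OF S])
    fix W assume W: "W \<in> \<pi>"
    obtain C where C: "C \<in> \<sigma>" "phi k n ` W \<subseteq> C" using SC W by blast
    have ne: "W \<noteq> {}" using partition_on_block_nonempty[OF P W] .
    have "W \<subseteq> R \<or> W \<inter> R = {}" using sat W unfolding saturated_def by blast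
    then show "\<exists>D\<in>split_by Q \<sigma>. phi k n ` W \<subseteq> D"
    proof
      assume "W \<subseteq> R"
      then have "phi k n ` W \<subseteq> C \<inter> Q" "C \<inter> Q \<noteq> {}" using C ne unfolding Q_def by auto
      then show ?thesis using C(1) unfolding split_by_def by blast
    next
      assume "W \<inter> R = {}"
      then have "W \<subseteq> {1..n*(k+1)} - R" using partition_on_block_subset[OF P W] by blast
      then have "phi k n u \<noteq> phi k n w" if "u \<in> R" "w \<in> W" for u w
        using sep that unfolding phi_separated_def by blast
      then have "phi k n ` W \<inter> Q = {}" unfolding Q_def by fastforce
      then have "phi k n ` W \<subseteq> C - Q" "C - Q \<noteq> {}" using C ne by auto
      then show ?thesis using C(1) unfolding split_by_def by blast
    qed
  qed
  then obtain D where "D \<in> split_by Q \<sigma>" "B \<subseteq> D"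
    using F B unfolding finest_compatible_def refines_def by blast
  then show ?thesis unfolding Q_def split_by_def by blast
qed

lemma segment_block_forced:
  assumes k: "0<k" and j: "Suc j < n" and pi: "\<pi> \<in> NC_lower (k+1) n" and F: "finest_compatible k n \<pi> \<sigma>"
    and B: "B \<in> \<sigma>" and T: "{j*k+1..<j*k+1+1+k} \<subseteq> B"
  shows "{j*(k+1)+1..<j*(k+1)+1+(k+1)} \<in> \<pi>"
proof -
  define s where "s = j*(k+1)+1"
  define S where "S = {s..<s+(k+1)}"
  have P: "partition_on {1..n*(k+1)} \<pi>" and cd: "\<forall>B\<in>\<pi>. card B = k+1"
    using pi unfolding NC_lower_def by (auto simp: algebra_simps)
  obtain n0 where n0: "n = Suc n0" "j < n0" using j by (cases n) auto
  have phiS: "phi k n ` S = {j*k+1..<j*k+1+1+k}"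
    using phi_image_segment[OF k n0(2)] n0(1) unfolding S_def s_def by simp
  have "(j+1)*(k+1) + (k+1) \<le> n*(k+1)" using mult_add_le_of_less[of "j+1" n "k+1"] j by simp
  then have SN: "S \<subseteq> {1..n*(k+1)}" unfolding S_def s_def by (auto simp: algebra_simps)
  have "s \<in> S" unfolding S_def by simp
  then obtain V where V: "V \<in> \<pi>" "s \<in> V" using partition_on_ex_block[OF P] SN by blast
  have step: "x + 1 \<in> V" if x: "x \<in> V" "x \<in> S" "x + 1 \<in> S" for x
  proof (rule ccontr)
    assume nx: "x + 1 \<notin> V"
    have "\<not> (k+1) dvd x"
    proof
      assume "(k+1) dvd x"
      then have "(k+1) dvd x - j*(k+1)" using dvd_triv_right by (rule dvd_diff_nat)
      moreover have "1 \<le> x - j*(k+1)" "x - j*(k+1) \<le> k" using x(2,3) unfolding S_def s_def by auto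
      ultimately show False using dvd_imp_le[of "k+1" "x - j*(k+1)"] by linarith
    qed
    moreover have "x + 1 \<le> n*(k+1)" using x(3) SN by auto
    ultimately obtain R where R: "x+1 \<in> R" "x \<notin> R" "saturated \<pi> R" "phi_separated k n R"
      using separating_region[OF k pi V(1) x(1) nx] by blast
    have "x \<in> {1..n*(k+1)} - R" using x(2) SN R(2) by blast
    then have "\<forall>u\<in>R. phi k n u \<noteq> phi k n x" using R(4) unfolding phi_separated_def by blast
    then have "phi k n x \<notin> phi k n ` R" by auto
    moreover have "phi k n (x+1) \<in> phi k n ` R" using R(1) by (rule imageI)
    moreover have "phi k n x \<in> B" "phi k n (x+1) \<in> B"
      using T phiS imageI[OF x(2), of "phi k n"] imageI[OF x(3), of "phi k n"] by auto
    ultimately show False using finest_compatible_block_split[OF F P R(3,4) B] by blast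
  qed
  have segment: "s + i \<in> V" if "i < k+1" for i
    using that
  proof (induction i)
    case (Suc i)
    then have "s + i \<in> V" by simp
    moreover have "s + i \<in> S" "s + i + 1 \<in> S" using Suc.prems unfolding S_def by auto
    ultimately show ?case using step by simp
  qed (use V in simp)
  have "S \<subseteq> V"
  proof
    fix y assume "y \<in> S"
    then have "y - s < k+1" "y = s + (y - s)" unfolding S_def by auto
    then show "y \<in> V" using segment by metis
  qed
  moreover have "card V = card S" using cd V unfolding S_def by simp
  moreover have "finite V" using partition_on_block_subset[OF P V(1)] finite_subset by blast
  ultimately have "V = S" using card_subset_eq by metis
  then show ?thesis using V unfolding S_def s_def by simp
qed

section \<open>The bijection\<close>

lemma finest_compatible_exists:
  assumes k: "0 < k"
  shows "\<pi> \<in> NC_lower (k+1) (Suc n) \<Longrightarrow> \<exists>\<sigma>\<in>NC_upper k (Suc n). finest_compatible k (Suc n) \<pi> \<sigma>"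
proof (induction n arbitrary: \<pi>)
  case 0
  then have "\<pi> = {{1..k+1}}" using NC_lower_one by simp
  moreover have "{{1..k}} \<in> NC_upper k 1"
    unfolding NC_upper_def noncrossing_def using k by (auto simp: partition_on_space)
  ultimately show ?case using finest_compatible_one[OF k] by auto
next
  case (Suc n)
  obtain j r \<pi>' where d: "\<pi>' \<in> NC_lower (k+1) (Suc n)" "j < Suc n" "1 \<le> r" "r \<le> k+1"
    "\<pi> = insert_interval (k+1) (j*(k+1)+r) \<pi>'"
    using NC_lower_Suc_decomp[OF k _ Suc.prems] by (metis zero_less_Suc)
  obtain \<sigma>' where s': "\<sigma>' \<in> NC_upper k (Suc n)" "finest_compatible k (Suc n) \<pi>' \<sigma>'" using Suc.IH[OF d(1)] by blast
  have P': "partition_on {1..(k+1)*Suc n} \<pi>'" using d(1) unfolding NC_lower_def by simp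
  have jk: "j*k + k \<le> Suc n * k" using mult_add_le_of_less[OF d(2)] .
  show ?case
  proof (cases "r = 1")
    case True
    have "finest_compatible k (Suc (Suc n)) \<pi> (widen k (j*k+1) \<sigma>')"
      using finest_compatible_widen[OF k d(2) P' s'(2)] d(5) True by simp
    moreover have "widen k (j*k+1) \<sigma>' \<in> NC_upper k (Suc (Suc n))"
    proof (rule NC_upper_widen[OF k s'(1)])
      have "Suc n * k = k * Suc n" by (rule mult.commute)
      then show "1 \<le> j*k+1" "j*k+1 \<le> k * Suc n" using jk k by linarith+
    qed
    ultimately show ?thesis by blast
  next
    case False
    then have r2: "2 \<le> r" using d(3) by simp
    have "finest_compatible k (Suc (Suc n)) \<pi> (insert_interval k (j*k+r) \<sigma>')"
      using finest_compatible_insert_interval[OF k d(2) r2 d(4) P' s'(2)] d(5) by simp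
    moreover have "insert_interval k (j*k+r) \<sigma>' \<in> NC_upper k (Suc (Suc n))"
    proof (rule NC_upper_insert_interval[OF k s'(1)])
      have "Suc n * k = k * Suc n" by (rule mult.commute)
      then show "1 \<le> j*k+r" "j*k+r \<le> k * Suc n + 1" using jk d(4) r2 by linarith+
    qed
    ultimately show ?thesis by blast
  qed
qed

lemma finest_compatible_surj:
  assumes k: "0 < k"
  shows "\<sigma> \<in> NC_upper k (Suc n) \<Longrightarrow> \<exists>\<pi>\<in>NC_lower (k+1) (Suc n). finest_compatible k (Suc n) \<pi> \<sigma>"
proof (induction n arbitrary: \<sigma>)
  case 0
  then have "\<sigma> = {{1..k}}" using NC_upper_one k by simp
  moreover have "{{1..k+1}} \<in> NC_lower (k+1) 1"
    unfolding NC_lower_def noncrossing_def by (auto simp: partition_on_space)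
  ultimately show ?case using finest_compatible_one[OF k] by auto
next
  case (Suc n)
  show ?case
  proof (rule NC_upper_Suc_decomp[OF k _ Suc.prems])
    fix j r \<sigma>' assume j: "j < Suc n" and r: "2 \<le> r" "r \<le> k+1"
      and \<sigma>': "\<sigma>' \<in> NC_upper k (Suc n)" "\<sigma> = insert_interval k (j*k+r) \<sigma>'"
    obtain \<pi>' where \<pi>': "\<pi>' \<in> NC_lower (k+1) (Suc n)" "finest_compatible k (Suc n) \<pi>' \<sigma>'"
      using Suc.IH[OF \<sigma>'(1)] by blast
    have "partition_on {1..(k+1)*Suc n} \<pi>'" using \<pi>'(1) unfolding NC_lower_def by simp
    then have "finest_compatible k (Suc (Suc n)) (insert_interval (k+1) (j*(k+1)+r) \<pi>') \<sigma>"
      using finest_compatible_insert_interval[OF k j r] \<pi>'(2) \<sigma>'(2) by simp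
    moreover have "insert_interval (k+1) (j*(k+1)+r) \<pi>' \<in> NC_lower (k+1) (Suc (Suc n))"
      using NC_lower_insert_interval[OF k \<pi>'(1)] mult_add_le_of_less[OF j, of "k+1"] r
      by (simp add: algebra_simps)
    ultimately show ?case by blast
  next
    fix j B \<sigma>' assume j: "j < Suc n"
      and \<sigma>': "\<sigma>' \<in> NC_upper k (Suc n)" "\<sigma> = widen k (j*k+1) \<sigma>'"
    obtain \<pi>' where \<pi>': "\<pi>' \<in> NC_lower (k+1) (Suc n)" "finest_compatible k (Suc n) \<pi>' \<sigma>'"
      using Suc.IH[OF \<sigma>'(1)] by blast
    have "partition_on {1..(k+1)*Suc n} \<pi>'" using \<pi>'(1) unfolding NC_lower_def by simp
    then have "finest_compatible k (Suc (Suc n)) (insert_interval (k+1) (j*(k+1)+1) \<pi>') \<sigma>"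
      using finest_compatible_widen[OF k j] \<pi>'(2) \<sigma>'(2) by simp
    moreover have "insert_interval (k+1) (j*(k+1)+1) \<pi>' \<in> NC_lower (k+1) (Suc (Suc n))"
      using NC_lower_insert_interval[OF k \<pi>'(1)] mult_add_le_of_less[OF j, of "k+1"]
      by (simp add: algebra_simps)
    ultimately show ?case by blast
  qed (simp)
qed

lemma finest_compatible_remove_interval:
  assumes k: "0 < k" and pi: "\<pi> \<in> NC_lower (k+1) (Suc (Suc n))"
    and F: "finest_compatible k (Suc (Suc n)) \<pi> \<sigma>"
    and I: "{a..<a+(k+1)} \<in> \<pi>" and a: "1 \<le> a" "a \<le> (k+1)*Suc n + 1"
    and step: "\<And>\<pi>' \<sigma>'. partition_on {1..(k+1)*Suc n} \<pi>' \<Longrightarrow> finest_compatible k (Suc n) \<pi>' \<sigma>' \<Longrightarrow>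
      finest_compatible k (Suc (Suc n)) (insert_interval (k+1) a \<pi>') (g \<sigma>')"
  obtains \<sigma>' where "finest_compatible k (Suc n) (remove_interval (k+1) a \<pi>) \<sigma>'" "\<sigma> = g \<sigma>'"
proof -
  have R: "remove_interval (k+1) a \<pi> \<in> NC_lower (k+1) (Suc n)"
    "\<pi> = insert_interval (k+1) a (remove_interval (k+1) a \<pi>)"
    using NC_lower_remove_interval[OF k pi I a] by auto
  obtain \<sigma>' where \<sigma>': "finest_compatible k (Suc n) (remove_interval (k+1) a \<pi>) \<sigma>'"
    using finest_compatible_exists[OF k R(1)] by blast
  have "finest_compatible k (Suc (Suc n)) \<pi> (g \<sigma>')"
    using step[OF _ \<sigma>'] R unfolding NC_lower_def by simp
  then have "\<sigma> = g \<sigma>'" using finest_compatible_unique F by metis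
  then show thesis using that \<sigma>' by blast
qed

lemma finest_compatible_inj:
  assumes k: "0 < k"
  shows "\<pi>1 \<in> NC_lower (k+1) (Suc n) \<Longrightarrow> \<pi>2 \<in> NC_lower (k+1) (Suc n) \<Longrightarrow>
         finest_compatible k (Suc n) \<pi>1 \<sigma> \<Longrightarrow> finest_compatible k (Suc n) \<pi>2 \<sigma> \<Longrightarrow> \<pi>1 = \<pi>2"
proof (induction n arbitrary: \<pi>1 \<pi>2 \<sigma>)
  case 0
  then show ?case using NC_lower_one by (metis One_nat_def)
next
  case (Suc n)
  have reduce: "\<pi>1 = \<pi>2"
    if I: "{a..<a+(k+1)} \<in> \<pi>1" "{a..<a+(k+1)} \<in> \<pi>2" and a: "1 \<le> a" "a \<le> (k+1)*Suc n + 1"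
      and g: "inj g" and step: "\<And>\<pi>' \<sigma>'. partition_on {1..(k+1)*Suc n} \<pi>' \<Longrightarrow>
        finest_compatible k (Suc n) \<pi>' \<sigma>' \<Longrightarrow>
        finest_compatible k (Suc (Suc n)) (insert_interval (k+1) a \<pi>') (g \<sigma>')"
    for a and g :: "nat set set \<Rightarrow> nat set set"
  proof -
    obtain \<sigma>1 where 1: "finest_compatible k (Suc n) (remove_interval (k+1) a \<pi>1) \<sigma>1" "\<sigma> = g \<sigma>1"
      using step by (rule finest_compatible_remove_interval[OF k Suc.prems(1,3) I(1) a])
    obtain \<sigma>2 where 2: "finest_compatible k (Suc n) (remove_interval (k+1) a \<pi>2) \<sigma>2" "\<sigma> = g \<sigma>2"
      using step by (rule finest_compatible_remove_interval[OF k Suc.prems(2,4) I(2) a])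
    have "\<sigma>1 = \<sigma>2" using 1(2) 2(2) g by (simp add: inj_eq)
    moreover have "remove_interval (k+1) a \<pi>i \<in> NC_lower (k+1) (Suc n)"
      "\<pi>i = insert_interval (k+1) a (remove_interval (k+1) a \<pi>i)"
      if "\<pi>i \<in> NC_lower (k+1) (Suc (Suc n))" "{a..<a+(k+1)} \<in> \<pi>i" for \<pi>i
      using NC_lower_remove_interval[OF k that a] by auto
    ultimately show ?thesis using Suc.IH 1(1) 2(1) Suc.prems(1,2) I by metis
  qed
  obtain \<sigma>1 where "\<sigma>1 \<in> NC_upper k (Suc (Suc n))" "finest_compatible k (Suc (Suc n)) \<pi>1 \<sigma>1"
    using finest_compatible_exists[OF k Suc.prems(1)] by blast
  then have S: "\<sigma> \<in> NC_upper k (Suc (Suc n))" using finest_compatible_unique Suc.prems(3) by metis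
  have C: "compatible k (Suc (Suc n)) \<pi>1 \<sigma>" "compatible k (Suc (Suc n)) \<pi>2 \<sigma>"
    using Suc.prems(3,4) unfolding finest_compatible_def by blast+
  show ?case
  proof (rule NC_upper_Suc_cases[OF k _ S])
    fix j r assume j: "j < Suc n" and r: "2 \<le> r" "r \<le> k+1" and I: "{j*k+r..<j*k+r+k} \<in> \<sigma>"
    have "Suc j < Suc (Suc n)" using j by simp
    then have "{j*(k+1)+r..<j*(k+1)+r+(k+1)} \<in> \<pi>1" "{j*(k+1)+r..<j*(k+1)+r+(k+1)} \<in> \<pi>2"
      using interval_block_forced[OF k _ r _ _ I] Suc.prems(1,2) C by blast+
    moreover have "inj (insert_interval k (j*k+r))" by (metis injI remove_insert_interval[OF k])
    moreover have "1 \<le> j*(k+1)+r" "j*(k+1)+r \<le> (k+1)*Suc n + 1"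
      using mult_add_le_of_less[OF j, of "k+1"] r by (auto simp: algebra_simps)
    ultimately show ?case using reduce finest_compatible_insert_interval[OF k j r] by blast
  next
    fix j B assume j: "j < Suc n" and B: "B \<in> \<sigma>" "{j*k+1..<j*k+1+1+k} \<subseteq> B"
    have "Suc j < Suc (Suc n)" using j by simp
    then have "{j*(k+1)+1..<j*(k+1)+1+(k+1)} \<in> \<pi>1" "{j*(k+1)+1..<j*(k+1)+1+(k+1)} \<in> \<pi>2"
      using segment_block_forced[OF k _ _ _ B] Suc.prems by blast+
    moreover have "inj (widen k (j*k+1))" by (metis injI narrow_widen)
    moreover have "1 \<le> j*(k+1)+1" "j*(k+1)+1 \<le> (k+1)*Suc n + 1"
      using mult_add_le_of_less[OF j, of "k+1"] by (auto simp: algebra_simps)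
    ultimately show ?case using reduce finest_compatible_widen[OF k j] by blast
  qed simp
qed

theorem lemma5p1:
  fixes n k :: nat
  assumes "0 < n" and "0 < k"
  shows "(\<forall>\<pi>\<in>NC_lower (k+1) n. fmap k n \<pi> \<in> NC_upper k n)
         \<and> bij_betw (fmap k n) (NC_lower (k+1) n) (NC_upper k n)"
proof -
  obtain m where n: "n = Suc m" using assms(1) by (cases n) auto
  have f: "finest_compatible k n \<pi> (fmap k n \<pi>) \<and> fmap k n \<pi> \<in> NC_upper k n"
    if "\<pi> \<in> NC_lower (k+1) n" for \<pi>
    using finest_compatible_exists[OF assms(2), of \<pi> m] that fmap_eqI n by auto
  have "inj_on (fmap k n) (NC_lower (k+1) n)"
    using f finest_compatible_inj[OF assms(2), of _ m] n by (intro inj_onI) metis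
  moreover have "\<sigma> \<in> fmap k n ` NC_lower (k+1) n" if \<sigma>: "\<sigma> \<in> NC_upper k n" for \<sigma>
  proof -
    obtain \<pi> where "\<pi> \<in> NC_lower (k+1) n" "finest_compatible k n \<pi> \<sigma>"
      using finest_compatible_surj[OF assms(2), of \<sigma> m] \<sigma> n by auto
    then show ?thesis using fmap_eqI by (metis image_eqI)
  qed
  ultimately show ?thesis using f unfolding bij_betw_def by blast
qed

end
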